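(* The function $g_{np}$ is 1-pass tractable.
   Context: For an integer $x>0$ with binary expansion $x=\sum_{j\ge0}a_j2^j$, $a_j\in\{0,1\}$, let $i_x=\min\{j: a_j=1\}$. Define $g_{np}:\mathbb{Z}_{\ge0}\to\mathbb{R}$ by $g_{np}(0)=0$ and $g_{np}(x)=2^{-i_x}$ for $x>0$. Streams: a stream of length $m$ with domain $[n]$ is a list $D=\langle (i_1,\delta_1),\dots,(i_m,\delta_m)\rangle$ with $i_j\in[n]$, $\delta_j\in\mathbb{Z}$; its frequency vector $V(D)=v\in\mathbb{Z}^n$ has $v_i=\sum_{j:i_j=i}\delta_j$. (Turnstile model) there is $M\in\mathbb{N}$ such that the frequency vector of $D$ and of every prefix of $D$ lies in $\{-M,\dots,M\}^n$; throughout $M$ is polynomial in $n$. $\mathcal{D}(n,m)$ is the set of such streams with domain $[n]$ and length at most $m$. A $p$-pass algorithm reads the stream $p$ times in order and may use randomness. For $g:\mathbb{Z}_{\ge0}\to\mathbb{R}$ and $v\in\mathbb{Z}^n$ let $g(v)=\sum_{i=1}^n g(|v_i|)$. The problem $(g,\epsilon)$-SUM is to output $\hat G$ with $P\big((1-\epsilon)g(V(D))\le \hat G\le (1+\epsilon)g(V(D))\big)\ge 2/3$. A function $f:\mathbb{R}_{\ge0}\to\mathbb{R}_{\ge0}$ is sub-polynomial if for every $\alpha>0$, $\lim_{x\to\infty}x^\alpha f(x)=\infty$ and $\lim_{x\to\infty}x^{-\alpha}f(x)=0$. $g$ is $p$-pass tractable if for every sub-polynomial $h$ and every $\epsilon\ge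 1/h(nM)$ there exist a sub-polynomial $h^*$ and a $p$-pass algorithm (with oracle access to $g$) that solves $(g,\epsilon)$-SUM for all streams in $\mathcal{D}(n,m)$ and all $n,M\ge1$ using at most $h^*(nM)$ bits of space in the worst case. *)

theory Defs
  imports "HOL-Probability.Probability_Mass_Function"
begin

definition low_bit :: "nat \<Rightarrow> nat" where
  "low_bit x = (LEAST j. odd (x div 2 ^ j))"

definition g_np :: "nat \<Rightarrow> real" where
  "g_np x = (if x = 0 then 0 else 2 powr (- real (low_bit x)))"

text \<open>Streams: lists of updates (i, delta) with i in [n] = {1..n}.\<close>
type_synonym stream = "(nat \<times> int) list"

definition freq :: "stream \<Rightarrow> nat \<Rightarrow> int" where
  "freq D i = sum_list (map snd (filter (\<lambda>p. fst p = i) D))"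

definition valid_stream :: "nat \<Rightarrow> nat \<Rightarrow> stream \<Rightarrow> bool" where
  "valid_stream n M D \<longleftrightarrow>
     (\<forall>p\<in>set D. fst p \<in> {1..n}) \<and>
     (\<forall>k\<le>length D. \<forall>i. \<bar>freq (take k D) i\<bar> \<le> int M)"

definition gsum :: "(nat \<Rightarrow> real) \<Rightarrow> nat \<Rightarrow> (nat \<Rightarrow> int) \<Rightarrow> real" where
  "gsum g n v = (\<Sum>i=1..n. g (nat \<bar>v i\<bar>))"

text \<open>A randomized one-pass streaming algorithm: memory state is a bit string;
random initial state, random transition per update, random output.\<close>
datatype alg = Alg "bool list pmf" "bool list \<Rightarrow> nat \<times> int \<Rightarrow> bool list pmf" "bool list \<Rightarrow> real pmf"

fun run :: "alg \<Rightarrow> stream \<Rightarrow> bool list pmf" where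
  "run (Alg i st ou) D = foldl (\<lambda>p x. bind_pmf p (\<lambda>s. st s x)) i D"

fun alg_output :: "alg \<Rightarrow> stream \<Rightarrow> real pmf" where
  "alg_output (Alg i st ou) D = bind_pmf (run (Alg i st ou) D) ou"

definition solves_sum :: "(nat \<Rightarrow> real) \<Rightarrow> real \<Rightarrow> nat \<Rightarrow> nat \<Rightarrow> alg \<Rightarrow> real \<Rightarrow> bool" where
  "solves_sum g eps n M A S \<longleftrightarrow>
     (\<forall>D. valid_stream n M D \<longrightarrow>
        (\<forall>k\<le>length D. \<forall>s\<in>set_pmf (run A (take k D)). real (length s) \<le> S) \<and>
        measure_pmf.prob (alg_output A D)
           {G. (1 - eps) * gsum g n (freq D) \<le> G \<and> G \<le> (1 + eps) * gsum g n (freq D)} \<ge> 2/3)"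

definition sub_polynomial :: "(real \<Rightarrow> real) \<Rightarrow> bool" where
  "sub_polynomial f \<longleftrightarrow> (\<forall>x\<ge>0. f x \<ge> 0) \<and>
     (\<forall>\<alpha>>0. filterlim (\<lambda>x. x powr \<alpha> * f x) at_top at_top \<and>
             ((\<lambda>x. x powr (-\<alpha>) * f x) \<longlongrightarrow> 0) at_top)"

definition one_pass_tractable :: "(nat \<Rightarrow> real) \<Rightarrow> bool" where
  "one_pass_tractable g \<longleftrightarrow>
     (\<forall>h eps. sub_polynomial h \<and> (\<forall>n M. eps n M \<ge> 1 / h (real (n * M))) \<longrightarrow>
        (\<exists>hs A. sub_polynomial hs \<and>
           (\<forall>n M. n \<ge> 1 \<and> M \<ge> 1 \<longrightarrow>
              solves_sum g (eps n M) n M (A n M) (hs (real (n * M))))))"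

end

theory Submission
  imports Defs "HOL-Library.Log_Nat" "HOL-Real_Asymp.Real_Asymp"
begin

text \<open>
  For an integer \<open>0 < |x| < 2^L\<close>, \<open>g_np |x|\<close> is the sum of \<open>2^-(j+1)\<close> over the \<open>j \<le> L\<close> with
  \<open>2^(j+1)\<close> not dividing \<open>x\<close> (the last term weighted \<open>2^-L\<close>). The sum of \<open>g_np\<close> over the frequency
  vector is therefore a weighted sum of the counts \<open>N_j\<close> of coordinates not divisible by \<open>2^(j+1)\<close>,
  and it suffices to estimate every \<open>N_j\<close> within a factor \<open>1 \<plusminus> \<epsilon>\<close>.

  As in the distinct elements sketch, random affine parities over GF(2) send each index to level
  \<open>l\<close> with probability \<open>2^-l\<close> and into one of \<open>2^b\<close> buckets, pairwise independently. The sketch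
  stores, for every level and bucket, the sum of the frequencies of its indices; it is linear in the
  frequency vector and hence maintained under turnstile updates. \<open>N_j\<close> is read off as \<open>2^l\<close> times
  the number of buckets whose sum is not divisible by \<open>2^(j+1)\<close>, at the last level where this
  number reaches a threshold \<open>K\<close>. Chebyshev's inequality for the level counts and Markov's
  inequality for the bucket collisions make all these estimates accurate with probability \<open>2/3\<close>
  once \<open>K\<close> is of order \<open>\<epsilon>^-2 log^2(nM)\<close> and \<open>2^b\<close> of order \<open>\<epsilon>^-3 log^4(nM)\<close>. The space is then
  polynomial in \<open>log(nM)\<close> and \<open>1/\<epsilon> \<le> h(nM)\<close>, hence sub-polynomial.
\<close>

section \<open>Pairwise independent hashing by random affine parities\<close>

definition bit_vectors :: "nat \<Rightarrow> (nat \<Rightarrow> bool) set" where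
  "bit_vectors L = {..<L} \<rightarrow>\<^sub>E UNIV"

definition parity :: "nat \<Rightarrow> (nat \<Rightarrow> bool) \<Rightarrow> (nat \<Rightarrow> bool) \<Rightarrow> bool" where
  "parity L a z = odd (card {k\<in>{..<L}. a k \<and> z k})"

lemma finite_bit_vectors [simp]: "finite (bit_vectors L)"
  unfolding bit_vectors_def by (intro finite_PiE) auto

lemma card_bit_vectors: "card (bit_vectors L) = 2 ^ L"
  unfolding bit_vectors_def by (subst card_PiE) auto

lemma card_filter_eq_sum_of_bool:
  "finite A \<Longrightarrow> of_nat (card {x\<in>A. P x}) = (\<Sum>x\<in>A. of_bool (P x) :: 'a :: semiring_1)"
  by (simp add: Int_def conj_commute)

lemma parity_neq_iff: "(parity L a z1 \<noteq> parity L a z2) = parity L a (\<lambda>k. z1 k \<noteq> z2 k)"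
proof -
  let ?A = "{k\<in>{..<L}. a k \<and> z1 k}" and ?B = "{k\<in>{..<L}. a k \<and> z2 k}"
  have "{k\<in>{..<L}. a k \<and> (z1 k \<noteq> z2 k)} = (?A \<union> ?B) - (?A \<inter> ?B)" by auto
  moreover have "card ((?A \<union> ?B) - (?A \<inter> ?B)) + 2 * card (?A \<inter> ?B) = card ?A + card ?B"
  proof -
    have "card (?A \<inter> ?B) \<le> card (?A \<union> ?B)" by (intro card_mono) auto
    moreover have "card ((?A \<union> ?B) - (?A \<inter> ?B)) = card (?A \<union> ?B) - card (?A \<inter> ?B)"
      by (intro card_Diff_subset) auto
    moreover have "card ?A + card ?B = card (?A \<union> ?B) + card (?A \<inter> ?B)"
      by (intro card_Un_Int) auto
    ultimately show ?thesis by linarith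
  qed
  ultimately have "card {k\<in>{..<L}. a k \<and> (z1 k \<noteq> z2 k)} + 2 * card (?A \<inter> ?B) = card ?A + card ?B"
    by simp
  then show ?thesis unfolding parity_def by presburger
qed

lemma parity_flip:
  assumes "k0 < L" "w k0"
  shows "parity L (a(k0 := \<not> a k0)) w = (\<not> parity L a w)"
proof -
  let ?A = "{k\<in>{..<L}. a k \<and> w k}" and ?A' = "{k\<in>{..<L}. (a(k0 := \<not> a k0)) k \<and> w k}"
  show ?thesis
  proof (cases "a k0")
    case True
    hence "?A = insert k0 ?A'" "k0 \<notin> ?A'" using assms by auto
    thus ?thesis unfolding parity_def by simp
  next
    case False
    hence "?A' = insert k0 ?A" "k0 \<notin> ?A" using assms by auto
    thus ?thesis unfolding parity_def by simp
  qed
qed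

lemma card_parity_eq:
  assumes "k0 < L" "w k0"
  shows "2 * card {a\<in>bit_vectors L. parity L a w = t} = 2 ^ L"
proof -
  define f where "f = (\<lambda>a::nat\<Rightarrow>bool. a(k0 := \<not> a k0))"
  have ff: "f (f a) = a" for a unfolding f_def by auto
  have f_bv: "a \<in> bit_vectors L \<Longrightarrow> f a \<in> bit_vectors L" for a
    using assms(1) unfolding f_def bit_vectors_def by (auto simp: PiE_iff extensional_def)
  have parity_f: "parity L (f a) w = (\<not> parity L a w)" for a
    unfolding f_def by (rule parity_flip[of k0 L w, OF assms])
  let ?S = "{a\<in>bit_vectors L. parity L a w = t}" and ?S' = "{a\<in>bit_vectors L. parity L a w = (\<not> t)}"
  have "bij_betw f ?S ?S'"
    by (rule bij_betwI[of _ _ _ f]) (use f_bv parity_f ff in auto)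
  hence "card ?S' = card ?S" by (simp add: bij_betw_same_card)
  moreover have "card (bit_vectors L) = card ?S + card ?S'"
    by (subst card_Un_disjoint[symmetric]) (auto intro: arg_cong[where f = card])
  ultimately show ?thesis by (simp add: card_bit_vectors)
qed

type_synonym seed = "nat \<Rightarrow> (nat \<Rightarrow> bool) \<times> bool"

text \<open>A seed consists of \<open>R\<close> independent rows \<open>(a, c)\<close>; row \<open>r\<close> hashes the bit vector \<open>z\<close>
  to the affine parity \<open>a \<cdot> z + c\<close> over GF(2).\<close>
definition hash_seeds :: "nat \<Rightarrow> nat \<Rightarrow> seed set" where
  "hash_seeds L R = {..<R} \<rightarrow>\<^sub>E (bit_vectors L \<times> UNIV)"

definition hash_bit :: "nat \<Rightarrow> seed \<Rightarrow> (nat \<Rightarrow> bool) \<Rightarrow> nat \<Rightarrow> bool" where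
  "hash_bit L s z r = (parity L (fst (s r)) z \<noteq> snd (s r))"

lemma finite_hash_seeds [simp]: "finite (hash_seeds L R)"
  unfolding hash_seeds_def by (intro finite_PiE) auto

lemma card_hash_seeds: "card (hash_seeds L R) = 2 ^ ((L + 1) * R)"
proof -
  have "card (bit_vectors L \<times> (UNIV :: bool set)) = 2 ^ (L + 1)"
    by (simp add: card_cartesian_product card_bit_vectors)
  moreover have "((2::nat) ^ (L + 1)) ^ R = 2 ^ ((L + 1) * R)" by (simp only: power_mult)
  ultimately show ?thesis
    unfolding hash_seeds_def by (simp only: card_PiE finite_lessThan prod_constant card_lessThan)
qed

lemma hash_seeds_nonempty: "hash_seeds L R \<noteq> {}"
  using card_hash_seeds[of L R] by (metis card.empty power_not_zero zero_neq_numeral)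

lemma card_hash_seeds_rowwise:
  "card {s\<in>hash_seeds L R. \<forall>r<R. Q r (s r)} = (\<Prod>r<R. card {ac\<in>bit_vectors L \<times> UNIV. Q r ac})"
proof -
  have "{s\<in>hash_seeds L R. \<forall>r<R. Q r (s r)} = Pi\<^sub>E {..<R} (\<lambda>r. {ac\<in>bit_vectors L \<times> UNIV. Q r ac})"
    unfolding hash_seeds_def by (simp add: PiE_iff set_eq_iff) blast
  thus ?thesis by (simp add: card_PiE)
qed

lemma sum_UNIV_bool: "(\<Sum>c\<in>(UNIV :: bool set). f c) = f True + f False"
  by (simp add: UNIV_bool add.commute)

lemma card_row_single:
  "card {ac\<in>bit_vectors L \<times> (UNIV :: bool set). P (parity L (fst ac) z \<noteq> snd ac)}
     = 2 ^ L * (of_bool (P True) + of_bool (P False))"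
proof -
  have "card {ac\<in>bit_vectors L \<times> (UNIV :: bool set). P (parity L (fst ac) z \<noteq> snd ac)}
      = (\<Sum>ac\<in>bit_vectors L \<times> (UNIV :: bool set). of_bool (P (parity L (fst ac) z \<noteq> snd ac)))"
    by (rule card_filter_eq_sum_of_bool[where 'a = nat, unfolded of_nat_id]) simp
  also have "\<dots> = (\<Sum>a\<in>bit_vectors L. \<Sum>c\<in>(UNIV :: bool set). of_bool (P (parity L a z \<noteq> c)))"
    by (simp only: sum.cartesian_product' fst_conv snd_conv)
  also have "\<dots> = (\<Sum>a\<in>bit_vectors L. of_bool (P True) + of_bool (P False))"
    by (intro sum.cong refl, case_tac "parity L x z") (simp_all add: sum_UNIV_bool add.commute)
  finally show ?thesis by (simp add: card_bit_vectors)
qed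

definition pair_truth_count :: "(bool \<Rightarrow> bool \<Rightarrow> bool) \<Rightarrow> nat" where
  "pair_truth_count P =
     of_bool (P True True) + of_bool (P False False) + of_bool (P True False) + of_bool (P False True)"

text \<open>Pairwise independence: on two distinct inputs the two hash bits of one row are uniform on
  \<open>bool \<times> bool\<close>.\<close>
lemma card_row_pair:
  assumes "k0 < L" "z1 k0 \<noteq> z2 k0"
  shows "2 * card {ac\<in>bit_vectors L \<times> (UNIV :: bool set).
                 P (parity L (fst ac) z1 \<noteq> snd ac) (parity L (fst ac) z2 \<noteq> snd ac)}
     = 2 ^ L * pair_truth_count P"
proof -
  define w where "w = (\<lambda>k. z1 k \<noteq> z2 k)"
  have wk: "w k0" using assms(2) unfolding w_def by simp
  let ?X = "of_bool (P True True) + of_bool (P False False) :: nat"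
  let ?Y = "of_bool (P True False) + of_bool (P False True) :: nat"
  have "card {ac\<in>bit_vectors L \<times> (UNIV :: bool set).
                 P (parity L (fst ac) z1 \<noteq> snd ac) (parity L (fst ac) z2 \<noteq> snd ac)}
      = (\<Sum>ac\<in>bit_vectors L \<times> (UNIV :: bool set).
           of_bool (P (parity L (fst ac) z1 \<noteq> snd ac) (parity L (fst ac) z2 \<noteq> snd ac)))"
    by (rule card_filter_eq_sum_of_bool[where 'a = nat, unfolded of_nat_id]) simp
  also have "\<dots> = (\<Sum>a\<in>bit_vectors L. \<Sum>c\<in>(UNIV :: bool set).
                    of_bool (P (parity L a z1 \<noteq> c) (parity L a z2 \<noteq> c)))"
    by (simp only: sum.cartesian_product' fst_conv snd_conv)
  also have "\<dots> = (\<Sum>a\<in>bit_vectors L. if parity L a w then ?Y else ?X)"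
  proof (intro sum.cong refl)
    fix a
    have "(parity L a z1 \<noteq> parity L a z2) = parity L a w" unfolding w_def by (rule parity_neq_iff)
    thus "(\<Sum>c\<in>(UNIV :: bool set). of_bool (P (parity L a z1 \<noteq> c) (parity L a z2 \<noteq> c)))
        = (if parity L a w then ?Y else ?X)"
      by (cases "parity L a z1"; cases "parity L a z2"; simp add: sum_UNIV_bool)
  qed
  also have "\<dots> = card {a\<in>bit_vectors L. parity L a w = True} * ?Y
                 + card {a\<in>bit_vectors L. parity L a w = False} * ?X"
    by (simp add: sum.If_cases Int_def conj_commute)
  finally have "2 * card {ac\<in>bit_vectors L \<times> (UNIV :: bool set).
                 P (parity L (fst ac) z1 \<noteq> snd ac) (parity L (fst ac) z2 \<noteq> snd ac)}
    = (2 * card {a\<in>bit_vectors L. parity L a w = True}) * ?Y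
      + (2 * card {a\<in>bit_vectors L. parity L a w = False}) * ?X"
    by (simp only: add_mult_distrib2 mult.assoc)
  also have "\<dots> = 2 ^ L * pair_truth_count P"
    unfolding card_parity_eq[of k0 L w, OF assms(1) wk] pair_truth_count_def
    by (simp only: add_mult_distrib2 add.assoc add.commute add.left_commute)
  finally show ?thesis .
qed
lemma exists_bit_neq:
  fixes x y :: nat
  assumes "x < 2 ^ L" "y < 2 ^ L" "x \<noteq> y"
  shows "\<exists>k<L. bit x k \<noteq> bit y k"
  using assms by (metis bit_eq_iff bit_take_bit_iff take_bit_nat_eq_self_iff)

lemma card_hash_seeds_pair_rowwise:
  fixes x y :: nat
  assumes "x < 2 ^ L" "y < 2 ^ L" "x \<noteq> y"
  shows "2 ^ R * card {s\<in>hash_seeds L R. \<forall>r<R. P r (hash_bit L s (bit x) r) (hash_bit L s (bit y) r)}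
     = (\<Prod>r<R. 2 ^ L * pair_truth_count (P r))"
proof -
  obtain k0 where k0: "k0 < L" "bit x k0 \<noteq> bit y k0" using exists_bit_neq[OF assms] by blast
  have "card {s\<in>hash_seeds L R. \<forall>r<R. P r (hash_bit L s (bit x) r) (hash_bit L s (bit y) r)}
     = (\<Prod>r<R. card {ac\<in>bit_vectors L \<times> UNIV.
          P r (parity L (fst ac) (bit x) \<noteq> snd ac) (parity L (fst ac) (bit y) \<noteq> snd ac)})"
    unfolding hash_bit_def by (rule card_hash_seeds_rowwise)
  then have "2 ^ R * card {s\<in>hash_seeds L R. \<forall>r<R. P r (hash_bit L s (bit x) r) (hash_bit L s (bit y) r)}
     = (\<Prod>r<R. 2 * card {ac\<in>bit_vectors L \<times> UNIV.
          P r (parity L (fst ac) (bit x) \<noteq> snd ac) (parity L (fst ac) (bit y) \<noteq> snd ac)})"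
    by (simp add: prod.distrib)
  also have "\<dots> = (\<Prod>r<R. 2 ^ L * pair_truth_count (P r))"
    by (intro prod.cong refl card_row_pair[of k0 L "bit x" "bit y", OF k0])
  finally show ?thesis .
qed

text \<open>The first \<open>L\<close> rows of a seed decide the sampling levels of an index, the last \<open>b\<close> rows its
  bucket: \<open>i\<close> survives to level \<open>l\<close> iff its first \<open>l\<close> hash bits vanish.\<close>
definition sampled :: "nat \<Rightarrow> seed \<Rightarrow> nat \<Rightarrow> nat \<Rightarrow> bool" where
  "sampled L s l i = (\<forall>r<l. \<not> hash_bit L s (bit i) r)"

definition bucket :: "nat \<Rightarrow> nat \<Rightarrow> seed \<Rightarrow> nat \<Rightarrow> nat \<Rightarrow> bool" where
  "bucket L b s i = restrict (\<lambda>r. hash_bit L s (bit i) (L + r)) {..<b}"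

lemma sampled_0 [simp]: "sampled L s 0 i"
  by (simp add: sampled_def)

lemma prod_lessThan_add:
  "(\<Prod>r<(L::nat) + m. f r) = (\<Prod>r<L. f r) * (\<Prod>r<m. f (L + r) :: nat)"
  by (induct m) (auto simp: mult.assoc)

lemma prod_lessThan_split:
  "(l::nat) \<le> L \<Longrightarrow> (\<Prod>r<L. f r) = (\<Prod>r<l. f r) * (\<Prod>r<L - l. f (l + r) :: nat)"
  using prod_lessThan_add[of f l "L - l"] by simp

lemma card_sampled:
  assumes "l \<le> L"
  shows "card {s\<in>hash_seeds L (L + b). sampled L s l i} * 2 ^ l = card (hash_seeds L (L + b))"
proof -
  let ?R = "L + b"
  have "card {s\<in>hash_seeds L ?R. sampled L s l i}
      = card {s\<in>hash_seeds L ?R. \<forall>r<?R. (\<lambda>r ac. r < l \<longrightarrow> \<not> (parity L (fst ac) (bit i) \<noteq> snd ac)) r (s r)}"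
    using assms unfolding sampled_def hash_bit_def by (intro arg_cong[where f = card]) auto
  also have "\<dots> = (\<Prod>r<?R. card {ac\<in>bit_vectors L \<times> UNIV. r < l \<longrightarrow> \<not> (parity L (fst ac) (bit i) \<noteq> snd ac)})"
    by (rule card_hash_seeds_rowwise)
  also have "\<dots> = (\<Prod>r<?R. 2 ^ L * (if r < l then 1 else 2))"
    by (intro prod.cong refl, subst card_row_single[where P = "\<lambda>p. _ \<longrightarrow> \<not> p"]) auto
  also have "\<dots> = (2 ^ L) ^ ?R * (\<Prod>r<?R. (if r < l then 1 else 2))"
    by (simp add: prod.distrib)
  also have "(\<Prod>r<?R. (if r < l then 1 else 2::nat)) = 2 ^ (?R - l)"
    using prod_lessThan_split[of l ?R "\<lambda>r. if r < l then 1 else 2"] assms by simp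
  finally have "card {s\<in>hash_seeds L ?R. sampled L s l i} * 2 ^ l = 2 ^ (L * ?R + (?R - l) + l)"
    by (simp only: power_add power_mult)
  also have "L * ?R + (?R - l) + l = (L + 1) * ?R" using assms by simp
  finally show ?thesis by (simp add: card_hash_seeds)
qed

lemma four_power: "(4::nat) ^ n = 2 ^ (2 * n)"
  by (simp add: power_mult)

lemma card_sampled_pair:
  fixes x y :: nat
  assumes "l \<le> L" "x < 2 ^ L" "y < 2 ^ L" "x \<noteq> y"
  shows "card {s\<in>hash_seeds L (L + b). sampled L s l x \<and> sampled L s l y} * 4 ^ l
       = card (hash_seeds L (L + b))"
proof -
  let ?R = "L + b"
  let ?P = "\<lambda>r p q. r < l \<longrightarrow> \<not> p \<and> \<not> q"
  have "{s\<in>hash_seeds L ?R. sampled L s l x \<and> sampled L s l y}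
      = {s\<in>hash_seeds L ?R. \<forall>r<?R. ?P r (hash_bit L s (bit x) r) (hash_bit L s (bit y) r)}"
    using assms unfolding sampled_def by auto
  hence "2 ^ ?R * card {s\<in>hash_seeds L ?R. sampled L s l x \<and> sampled L s l y} = (\<Prod>r<?R. 2 ^ L * pair_truth_count (?P r))"
    using card_hash_seeds_pair_rowwise[OF assms(2-4), of ?R ?P] by simp
  also have "\<dots> = (\<Prod>r<?R. 2 ^ L * (if r < l then 1 else 4))"
    by (intro prod.cong refl) (auto simp: pair_truth_count_def)
  also have "\<dots> = (2 ^ L) ^ ?R * (\<Prod>r<?R. (if r < l then 1 else 4))"
    by (simp add: prod.distrib)
  also have "(\<Prod>r<?R. (if r < l then 1 else 4::nat)) = 4 ^ (?R - l)"
    using prod_lessThan_split[of l ?R "\<lambda>r. if r < l then 1 else 4"] assms by simp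
  finally have "2 ^ ?R * (card {s\<in>hash_seeds L ?R. sampled L s l x \<and> sampled L s l y} * 4 ^ l)
      = (2 ^ L) ^ ?R * 4 ^ (?R - l + l)"
    by (simp add: power_add algebra_simps)
  also have "\<dots> = 2 ^ ?R * 2 ^ ((L + 1) * ?R)"
    using assms(1) by (simp add: four_power power_mult[symmetric] power_add[symmetric] algebra_simps)
  finally show ?thesis by (simp add: card_hash_seeds)
qed

lemma bucket_eq_iff:
  "bucket L b s x = bucket L b s y \<longleftrightarrow> (\<forall>r<L + b. L \<le> r \<longrightarrow> hash_bit L s (bit x) r = hash_bit L s (bit y) r)"
proof
  assume h: "bucket L b s x = bucket L b s y"
  show "\<forall>r<L + b. L \<le> r \<longrightarrow> hash_bit L s (bit x) r = hash_bit L s (bit y) r"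
  proof (intro allI impI)
    fix r assume "r < L + b" "L \<le> r"
    hence "r - L < b" by simp
    hence "bucket L b s x (r - L) = bucket L b s y (r - L)" using h by simp
    thus "hash_bit L s (bit x) r = hash_bit L s (bit y) r" using \<open>r - L < b\<close> \<open>L \<le> r\<close> by (simp add: bucket_def)
  qed
next
  assume "\<forall>r<L + b. L \<le> r \<longrightarrow> hash_bit L s (bit x) r = hash_bit L s (bit y) r"
  then show "bucket L b s x = bucket L b s y"
    unfolding bucket_def by (intro restrict_ext) auto
qed

lemma card_sampled_pair_same_bucket:
  fixes x y :: nat
  assumes "l \<le> L" "x < 2 ^ L" "y < 2 ^ L" "x \<noteq> y"
  shows "card {s\<in>hash_seeds L (L + b). sampled L s l x \<and> sampled L s l y \<and> bucket L b s x = bucket L b s y}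
           * 4 ^ l * 2 ^ b
       = card (hash_seeds L (L + b))"
proof -
  let ?R = "L + b"
  let ?P = "\<lambda>r p q. (r < l \<longrightarrow> \<not> p \<and> \<not> q) \<and> (L \<le> r \<longrightarrow> p = q)"
  let ?c = "\<lambda>r. pair_truth_count (?P r)"
  have "{s\<in>hash_seeds L ?R. sampled L s l x \<and> sampled L s l y \<and> bucket L b s x = bucket L b s y}
      = {s\<in>hash_seeds L ?R. \<forall>r<?R. ?P r (hash_bit L s (bit x) r) (hash_bit L s (bit y) r)}"
    using assms(1) unfolding sampled_def bucket_eq_iff by auto
  hence "2 ^ ?R * card {s\<in>hash_seeds L ?R. sampled L s l x \<and> sampled L s l y \<and> bucket L b s x = bucket L b s y}
      = (\<Prod>r<?R. 2 ^ L * ?c r)"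
    using card_hash_seeds_pair_rowwise[OF assms(2-4), of ?R ?P] by simp
  also have "\<dots> = (2 ^ L) ^ ?R * ((\<Prod>r<l. ?c r) * (\<Prod>r<L - l. ?c (l + r)) * (\<Prod>r<b. ?c (L + r)))"
    using prod_lessThan_add[of ?c L b] prod_lessThan_split[of l L ?c] assms(1) by (simp add: prod.distrib)
  also have "(\<Prod>r<l. ?c r) = 1" using assms(1) by (intro prod.neutral) (auto simp: pair_truth_count_def)
  also have "(\<Prod>r<L - l. ?c (l + r)) = 4 ^ (L - l)"
    by (subst prod.cong[OF refl, where h = "\<lambda>_. 4"]) (auto simp: pair_truth_count_def)
  also have "(\<Prod>r<b. ?c (L + r)) = 2 ^ b"
    using assms(1) by (subst prod.cong[OF refl, where h = "\<lambda>_. 2"]) (auto simp: pair_truth_count_def)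
  finally have "2 ^ ?R * (card {s\<in>hash_seeds L ?R. sampled L s l x \<and> sampled L s l y \<and> bucket L b s x = bucket L b s y}
      * 4 ^ l * 2 ^ b) = (2 ^ L) ^ ?R * 4 ^ (L - l + l) * (2 ^ b * 2 ^ b)"
    by (simp add: power_add algebra_simps)
  also have "\<dots> = 2 ^ ?R * 2 ^ ((L + 1) * ?R)"
    using assms(1) by (simp add: four_power power_mult[symmetric] power_add[symmetric] algebra_simps)
  finally show ?thesis by (simp add: card_hash_seeds)
qed

section \<open>Moments of the level counts\<close>

definition level_count :: "nat \<Rightarrow> seed \<Rightarrow> nat \<Rightarrow> nat set \<Rightarrow> nat" where
  "level_count L s l T = card {i\<in>T. sampled L s l i}"

definition collision_count :: "nat \<Rightarrow> nat \<Rightarrow> seed \<Rightarrow> nat \<Rightarrow> nat set \<Rightarrow> nat" where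
  "collision_count L b s l T = card {p\<in>T \<times> T. fst p \<noteq> snd p \<and> sampled L s l (fst p) \<and> sampled L s l (snd p)
                                     \<and> bucket L b s (fst p) = bucket L b s (snd p)}"

lemma sum_of_bool_eq_card_divide:
  assumes "finite A" "card {x\<in>A. P x} * c = card A" "c > 0"
  shows "(\<Sum>x\<in>A. of_bool (P x)) = real (card A) / real c"
proof -
  have "real (card {x\<in>A. P x}) * real c = real (card A)"
    using arg_cong[where f = real, OF assms(2)] by simp
  then show ?thesis
    using assms(3) card_filter_eq_sum_of_bool[OF assms(1), where 'a = real, of P] by (simp add: field_simps)
qed

lemma sum_delta_const:
  assumes "finite T"
  shows "(\<Sum>i\<in>T. \<Sum>k\<in>T. if i = k then a else (c::real))
       = real (card T) * a + real (card T) * (real (card T) - 1) * c"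
proof -
  have "(\<Sum>k\<in>T. if i = k then a else c) = a + (real (card T) - 1) * c" if "i \<in> T" for i
  proof -
    have "(\<Sum>k\<in>T. if i = k then a else c) = (\<Sum>k\<in>T. c + (if i = k then a - c else 0))"
      by (intro sum.cong) auto
    also have "\<dots> = real (card T) * c + (a - c)" using assms that by (simp add: sum.distrib)
    finally show ?thesis by (simp add: algebra_simps)
  qed
  hence "(\<Sum>i\<in>T. \<Sum>k\<in>T. if i = k then a else c) = (\<Sum>i\<in>T. a + (real (card T) - 1) * c)"
    by (intro sum.cong) auto
  thus ?thesis by (simp add: algebra_simps)
qed

context
  fixes L b l :: nat and T :: "nat set"
  assumes l_le: "l \<le> L" and finite_T: "finite T" and T_less: "T \<subseteq> {..<2 ^ L}"
begin

lemma sum_sampled: "(\<Sum>s\<in>hash_seeds L (L + b). of_bool (sampled L s l i)) = real (card (hash_seeds L (L + b))) / 2 ^ l"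
  using sum_of_bool_eq_card_divide[OF finite_hash_seeds card_sampled[OF l_le]] by simp

lemma sum_level_count:
  "(\<Sum>s\<in>hash_seeds L (L + b). real (level_count L s l T)) = real (card (hash_seeds L (L + b))) * (real (card T) / 2 ^ l)"
proof -
  have "(\<Sum>s\<in>hash_seeds L (L + b). real (level_count L s l T))
      = (\<Sum>i\<in>T. \<Sum>s\<in>hash_seeds L (L + b). of_bool (sampled L s l i))"
    unfolding level_count_def card_filter_eq_sum_of_bool[OF finite_T] by (rule sum.swap)
  also have "\<dots> = (\<Sum>i\<in>T. real (card (hash_seeds L (L + b))) / 2 ^ l)"
    by (simp only: sum_sampled)
  finally show ?thesis by simp
qed

lemma sum_sampled_pair:
  assumes "i \<in> T" "k \<in> T"
  shows "(\<Sum>s\<in>hash_seeds L (L + b). of_bool (sampled L s l i \<and> sampled L s l k))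
       = (if i = k then real (card (hash_seeds L (L + b))) / 2 ^ l else real (card (hash_seeds L (L + b))) / 4 ^ l)"
proof (cases "i = k")
  case True
  then show ?thesis using sum_sampled by simp
next
  case False
  have "i < 2 ^ L" "k < 2 ^ L" using assms T_less by auto
  from sum_of_bool_eq_card_divide[OF finite_hash_seeds card_sampled_pair[OF l_le this False]] False
  show ?thesis by simp
qed

lemma sum_level_count_sq:
  "(\<Sum>s\<in>hash_seeds L (L + b). real (level_count L s l T) ^ 2)
   = real (card (hash_seeds L (L + b))) * (real (card T) / 2 ^ l + real (card T) * (real (card T) - 1) / 4 ^ l)"
proof -
  let ?S = "hash_seeds L (L + b)"
  have "(\<Sum>s\<in>?S. real (level_count L s l T) ^ 2)
      = (\<Sum>s\<in>?S. \<Sum>i\<in>T. \<Sum>k\<in>T. of_bool (sampled L s l i \<and> sampled L s l k))"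
    unfolding level_count_def card_filter_eq_sum_of_bool[OF finite_T] power2_eq_square sum_product
    by (simp only: of_bool_conj)
  also have "\<dots> = (\<Sum>i\<in>T. \<Sum>k\<in>T. \<Sum>s\<in>?S. of_bool (sampled L s l i \<and> sampled L s l k))"
    by (subst sum.swap) (simp only: sum.swap[of _ ?S])
  also have "\<dots> = (\<Sum>i\<in>T. \<Sum>k\<in>T. if i = k then real (card ?S) / 2 ^ l else real (card ?S) / 4 ^ l)"
    by (intro sum.cong refl sum_sampled_pair)
  also have "\<dots> = real (card T) * (real (card ?S) / 2 ^ l) + real (card T) * (real (card T) - 1) * (real (card ?S) / 4 ^ l)"
    by (rule sum_delta_const[OF finite_T])
  finally show ?thesis by (simp add: algebra_simps)
qed

text \<open>The level counts are sums of pairwise independent indicators, so their variance is at most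
  their mean.\<close>
lemma sum_level_count_deviation_sq:
  "(\<Sum>s\<in>hash_seeds L (L + b). (real (level_count L s l T) - real (card T) / 2 ^ l) ^ 2)
     \<le> real (card (hash_seeds L (L + b))) * (real (card T) / 2 ^ l)"
proof -
  let ?S = "hash_seeds L (L + b)"
  define \<mu> where "\<mu> = real (card T) / 2 ^ l"
  define N where "N = real (card T)"
  have "(\<Sum>s\<in>?S. (real (level_count L s l T) - \<mu>) ^ 2)
      = (\<Sum>s\<in>?S. real (level_count L s l T) ^ 2) - 2 * \<mu> * (\<Sum>s\<in>?S. real (level_count L s l T))
        + real (card ?S) * \<mu> ^ 2"
    by (simp add: power2_diff sum.distrib sum_subtractf sum_distrib_left algebra_simps)
  also have "\<dots> = real (card ?S) * (\<mu> + N * (N - 1) / 4 ^ l - \<mu> ^ 2)"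
    unfolding sum_level_count_sq sum_level_count \<mu>_def N_def by (simp add: algebra_simps power2_eq_square)
  also have "\<dots> \<le> real (card ?S) * \<mu>"
  proof -
    have "\<mu> ^ 2 = N ^ 2 / 4 ^ l"
      unfolding \<mu>_def N_def by (simp add: power_divide power_mult_distrib[symmetric] power2_eq_square)
    moreover have "N * (N - 1) \<le> N ^ 2" unfolding N_def by (simp add: power2_eq_square algebra_simps)
    ultimately have "N * (N - 1) / 4 ^ l \<le> \<mu> ^ 2" by (simp add: divide_right_mono)
    then show ?thesis by (intro mult_left_mono) auto
  qed
  finally show ?thesis unfolding \<mu>_def .
qed

lemma sum_collision_count:
  "(\<Sum>s\<in>hash_seeds L (L + b). real (collision_count L b s l T))
     \<le> real (card (hash_seeds L (L + b))) * (real (card T) / 2 ^ l) ^ 2 / 2 ^ b"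
proof -
  let ?S = "hash_seeds L (L + b)"
  let ?P = "\<lambda>s p. fst p \<noteq> snd p \<and> sampled L s l (fst p) \<and> sampled L s l (snd p)
                  \<and> bucket L b s (fst p) = bucket L b s (snd p)"
  have "(\<Sum>s\<in>?S. real (collision_count L b s l T)) = (\<Sum>p\<in>T \<times> T. \<Sum>s\<in>?S. of_bool (?P s p))"
    unfolding collision_count_def card_filter_eq_sum_of_bool[OF finite_cartesian_product[OF finite_T finite_T]]
    by (rule sum.swap)
  also have "\<dots> = (\<Sum>p\<in>T \<times> T. if fst p = snd p then 0 else real (card ?S) / (4 ^ l * 2 ^ b))"
  proof (intro sum.cong refl)
    fix p assume p: "p \<in> T \<times> T"
    show "(\<Sum>s\<in>?S. of_bool (?P s p)) = (if fst p = snd p then 0 else real (card ?S) / (4 ^ l * 2 ^ b))"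
    proof (cases "fst p = snd p")
      case False
      have "fst p < 2 ^ L" "snd p < 2 ^ L" using p T_less by auto
      from sum_of_bool_eq_card_divide[OF finite_hash_seeds
            card_sampled_pair_same_bucket[OF l_le this False, of b, unfolded mult.assoc]] False
      show ?thesis by simp
    qed simp
  qed
  also have "\<dots> = (\<Sum>i\<in>T. \<Sum>k\<in>T. if i = k then 0 else real (card ?S) / (4 ^ l * 2 ^ b))"
    by (subst sum.cartesian_product) (simp add: split_beta)
  also have "\<dots> = real (card T) * (real (card T) - 1) * (real (card ?S) / (4 ^ l * 2 ^ b))"
    using sum_delta_const[OF finite_T, of 0] by simp
  also have "\<dots> \<le> real (card T) * real (card T) * (real (card ?S) / (4 ^ l * 2 ^ b))"
    by (intro mult_right_mono mult_left_mono) auto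
  also have "\<dots> = real (card ?S) * (real (card T) / 2 ^ l) ^ 2 / 2 ^ b"
    by (simp add: power_divide power_mult_distrib[symmetric] power2_eq_square field_simps)
  finally show ?thesis .
qed

end

lemma card_deviation_ge_le:
  assumes "finite S" "t > 0"
  shows "real (card {s\<in>S. t \<le> \<bar>f s - m\<bar>}) * t ^ 2 \<le> (\<Sum>s\<in>S. (f s - m) ^ 2)"
proof -
  have "real (card {s\<in>S. t \<le> \<bar>f s - m\<bar>}) * t ^ 2 = (\<Sum>s\<in>S. of_bool (t \<le> \<bar>f s - m\<bar>) * t ^ 2)"
    using assms(1) by (simp add: card_filter_eq_sum_of_bool sum_distrib_right)
  also have "\<dots> \<le> (\<Sum>s\<in>S. (f s - m) ^ 2)"
  proof (intro sum_mono)
    fix s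
    have "t ^ 2 \<le> \<bar>f s - m\<bar> ^ 2" if "t \<le> \<bar>f s - m\<bar>" using that assms(2) by (intro power_mono) auto
    then show "of_bool (t \<le> \<bar>f s - m\<bar>) * t ^ 2 \<le> (f s - m) ^ 2" by auto
  qed
  finally show ?thesis .
qed

lemma card_gt_le:
  assumes "finite S" "t > 0" "\<And>s. s \<in> S \<Longrightarrow> f s \<ge> 0"
  shows "real (card {s\<in>S. t < f s}) * t \<le> (\<Sum>s\<in>S. f s)"
proof -
  have "real (card {s\<in>S. t < f s}) * t = (\<Sum>s\<in>S. of_bool (t < f s) * t)"
    using assms(1) by (simp add: card_filter_eq_sum_of_bool sum_distrib_right)
  also have "\<dots> \<le> (\<Sum>s\<in>S. f s)"
    by (intro sum_mono) (use assms in auto)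
  finally show ?thesis .
qed

definition good_level :: "nat \<Rightarrow> nat \<Rightarrow> nat set \<Rightarrow> real \<Rightarrow> real \<Rightarrow> nat \<Rightarrow> seed \<Rightarrow> bool" where
  "good_level L b T e K l s \<longleftrightarrow>
     (let \<mu> = real (card T) / 2 ^ l; Y = real (level_count L s l T) in
       (\<mu> < K / 2 \<longrightarrow> Y < K) \<and>
       (K / 2 \<le> \<mu> \<and> \<mu> < 4 * K \<longrightarrow> \<bar>Y - \<mu>\<bar> \<le> e * \<mu> / 2) \<and>
       (\<mu> < 4 * K \<longrightarrow> real (collision_count L b s l T) \<le> e * \<mu> / 2))"

context
  fixes L b l :: nat and T :: "nat set" and K e :: real
  assumes l_le: "l \<le> L" and finite_T: "finite T" and T_less: "T \<subseteq> {..<2 ^ L}"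
    and e_pos: "e > 0" and K_pos: "K > 0"
begin

lemma card_sparse_level_overfull:
  defines "\<mu> \<equiv> real (card T) / 2 ^ l"
  assumes "\<mu> < K / 2"
  shows "real (card {s\<in>hash_seeds L (L + b). K \<le> real (level_count L s l T)})
           \<le> real (card (hash_seeds L (L + b))) * (2 / K)"
proof -
  let ?S = "hash_seeds L (L + b)" and ?Y = "\<lambda>s. real (level_count L s l T)"
  have "{s\<in>?S. K \<le> ?Y s} \<subseteq> {s\<in>?S. K / 2 \<le> \<bar>?Y s - \<mu>\<bar>}" using assms(2) by auto
  hence "real (card {s\<in>?S. K \<le> ?Y s}) * (K / 2) ^ 2 \<le> real (card {s\<in>?S. K / 2 \<le> \<bar>?Y s - \<mu>\<bar>}) * (K / 2) ^ 2"
    by (intro mult_right_mono of_nat_mono card_mono) auto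
  also have "\<dots> \<le> (\<Sum>s\<in>?S. (?Y s - \<mu>) ^ 2)" by (rule card_deviation_ge_le) (use K_pos in auto)
  also have "\<dots> \<le> real (card ?S) * \<mu>"
    unfolding \<mu>_def by (rule sum_level_count_deviation_sq[OF l_le finite_T T_less])
  also have "\<dots> \<le> real (card ?S) * (K / 2)" using assms(2) by (intro mult_left_mono) auto
  finally show ?thesis using K_pos by (simp add: power2_eq_square field_simps)
qed

lemma card_level_count_inaccurate:
  defines "\<mu> \<equiv> real (card T) / 2 ^ l"
  assumes "K / 2 \<le> \<mu>"
  shows "real (card {s\<in>hash_seeds L (L + b). e * \<mu> / 2 < \<bar>real (level_count L s l T) - \<mu>\<bar>})
           \<le> real (card (hash_seeds L (L + b))) * (8 / (e ^ 2 * K))"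
proof -
  let ?S = "hash_seeds L (L + b)" and ?Y = "\<lambda>s. real (level_count L s l T)"
  have \<mu>_pos: "\<mu> > 0" using assms(2) K_pos by simp
  have "real (card {s\<in>?S. e * \<mu> / 2 < \<bar>?Y s - \<mu>\<bar>}) * (e * \<mu> / 2) ^ 2
      \<le> real (card {s\<in>?S. e * \<mu> / 2 \<le> \<bar>?Y s - \<mu>\<bar>}) * (e * \<mu> / 2) ^ 2"
    by (intro mult_right_mono of_nat_mono card_mono) auto
  also have "\<dots> \<le> (\<Sum>s\<in>?S. (?Y s - \<mu>) ^ 2)" by (rule card_deviation_ge_le) (use e_pos \<mu>_pos in auto)
  also have "\<dots> \<le> real (card ?S) * \<mu>"
    unfolding \<mu>_def by (rule sum_level_count_deviation_sq[OF l_le finite_T T_less])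
  finally have "real (card {s\<in>?S. e * \<mu> / 2 < \<bar>?Y s - \<mu>\<bar>}) \<le> real (card ?S) * (4 / (e ^ 2 * \<mu>))"
    using e_pos \<mu>_pos by (simp add: power2_eq_square field_simps)
  also have "\<dots> \<le> real (card ?S) * (8 / (e ^ 2 * K))"
    using assms(2) e_pos K_pos by (intro mult_left_mono) (auto simp: field_simps)
  finally show ?thesis .
qed

lemma card_many_collisions:
  defines "\<mu> \<equiv> real (card T) / 2 ^ l"
  assumes "\<mu> < 4 * K"
  shows "real (card {s\<in>hash_seeds L (L + b). e * \<mu> / 2 < real (collision_count L b s l T)})
           \<le> real (card (hash_seeds L (L + b))) * (8 * K / (e * 2 ^ b))"
proof (cases "\<mu> = 0")
  case True
  then have "T = {}" unfolding \<mu>_def using finite_T by simp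
  then show ?thesis using True e_pos K_pos by (simp add: collision_count_def)
next
  case False
  let ?S = "hash_seeds L (L + b)" and ?C = "\<lambda>s. real (collision_count L b s l T)"
  have \<mu>_pos: "\<mu> > 0" using False unfolding \<mu>_def by simp
  have "real (card {s\<in>?S. e * \<mu> / 2 < ?C s}) * (e * \<mu> / 2) \<le> (\<Sum>s\<in>?S. ?C s)"
    by (rule card_gt_le) (use e_pos \<mu>_pos in auto)
  also have "\<dots> \<le> real (card ?S) * \<mu> ^ 2 / 2 ^ b"
    unfolding \<mu>_def by (rule sum_collision_count[OF l_le finite_T T_less])
  finally have "real (card {s\<in>?S. e * \<mu> / 2 < ?C s}) \<le> real (card ?S) * (2 * \<mu> / (e * 2 ^ b))"
    using e_pos \<mu>_pos by (simp add: power2_eq_square field_simps)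
  also have "\<dots> \<le> real (card ?S) * (8 * K / (e * 2 ^ b))"
    using assms(2) e_pos by (intro mult_left_mono divide_right_mono) auto
  finally show ?thesis .
qed

lemma card_not_good_level:
  "real (card {s\<in>hash_seeds L (L + b). \<not> good_level L b T e K l s})
     \<le> real (card (hash_seeds L (L + b))) * (2 / K + 8 / (e ^ 2 * K) + 8 * K / (e * 2 ^ b))"
proof -
  let ?S = "hash_seeds L (L + b)"
  let ?\<mu> = "real (card T) / 2 ^ l"
  define A where "A = {s\<in>?S. ?\<mu> < K / 2 \<and> K \<le> real (level_count L s l T)}"
  define B where "B = {s\<in>?S. K / 2 \<le> ?\<mu> \<and> ?\<mu> < 4 * K \<and> e * ?\<mu> / 2 < \<bar>real (level_count L s l T) - ?\<mu>\<bar>}"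
  define C where "C = {s\<in>?S. ?\<mu> < 4 * K \<and> e * ?\<mu> / 2 < real (collision_count L b s l T)}"
  have "real (card A) \<le> real (card ?S) * (2 / K)"
  proof (cases "?\<mu> < K / 2")
    case True
    then have "A = {s\<in>?S. K \<le> real (level_count L s l T)}" unfolding A_def by auto
    then show ?thesis using card_sparse_level_overfull[OF True] by simp
  qed (use K_pos in \<open>simp add: A_def\<close>)
  moreover have "real (card B) \<le> real (card ?S) * (8 / (e ^ 2 * K))"
  proof (cases "K / 2 \<le> ?\<mu>")
    case True
    have "card B \<le> card {s\<in>?S. e * ?\<mu> / 2 < \<bar>real (level_count L s l T) - ?\<mu>\<bar>}"
      unfolding B_def by (intro card_mono) auto
    then show ?thesis using card_level_count_inaccurate[OF True] by linarith
  qed (use e_pos K_pos in \<open>simp add: B_def\<close>)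
  moreover have "real (card C) \<le> real (card ?S) * (8 * K / (e * 2 ^ b))"
  proof (cases "?\<mu> < 4 * K")
    case True
    then have "C = {s\<in>?S. e * ?\<mu> / 2 < real (collision_count L b s l T)}" unfolding C_def by auto
    then show ?thesis using card_many_collisions[OF True] by simp
  qed (use e_pos K_pos in \<open>simp add: C_def\<close>)
  moreover have "card {s\<in>?S. \<not> good_level L b T e K l s} \<le> card A + card B + card C"
  proof -
    have "{s\<in>?S. \<not> good_level L b T e K l s} \<subseteq> A \<union> B \<union> C"
      unfolding A_def B_def C_def good_level_def Let_def by auto
    then have "card {s\<in>?S. \<not> good_level L b T e K l s} \<le> card (A \<union> B \<union> C)"
      by (intro card_mono) (auto simp: A_def B_def C_def)
    also have "\<dots> \<le> card A + card B + card C" by (meson card_Un_le add_right_mono order_trans)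
    finally show ?thesis .
  qed
  then have "real (card {s\<in>?S. \<not> good_level L b T e K l s}) \<le> real (card A) + real (card B) + real (card C)"
    by (simp only: of_nat_add[symmetric] of_nat_le_iff)
  ultimately show ?thesis
    unfolding distrib_left by linarith
qed

end

section \<open>Reading a count off the levels\<close>

definition chosen_level :: "nat \<Rightarrow> (nat \<Rightarrow> real) \<Rightarrow> real \<Rightarrow> nat" where
  "chosen_level Lv Z K = (if \<exists>l\<le>Lv. K \<le> Z l then Max {l. l \<le> Lv \<and> K \<le> Z l} else 0)"

text \<open>At level \<open>l\<close>, \<open>Y l\<close> stands for the number of sampled indices (mean \<open>N / 2^l\<close>), \<open>Z l\<close> for the
  number of nonzero buckets and \<open>C l\<close> for the number of colliding pairs.\<close>
locale level_estimate =
  fixes Lv N :: nat and K e :: real and Y Z C :: "nat \<Rightarrow> real"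
  assumes e_pos: "0 < e" and e_le: "e \<le> 1/2" and K_ge: "1 \<le> K" and N_less: "real N < 2 ^ Lv"
    and Y_0: "Y 0 = real N"
    and Z_bounds: "\<And>l. l \<le> Lv \<Longrightarrow> Y l - C l \<le> Z l \<and> Z l \<le> Y l"
    and sparse: "\<And>l. l \<le> Lv \<Longrightarrow> real N / 2 ^ l < K / 2 \<Longrightarrow> Y l < K"
    and accurate: "\<And>l. l \<le> Lv \<Longrightarrow> K / 2 \<le> real N / 2 ^ l \<Longrightarrow> real N / 2 ^ l < 4 * K \<Longrightarrow>
                     \<bar>Y l - real N / 2 ^ l\<bar> \<le> e * (real N / 2 ^ l) / 2"
    and few_collisions: "\<And>l. l \<le> Lv \<Longrightarrow> real N / 2 ^ l < 4 * K \<Longrightarrow> C l \<le> e * (real N / 2 ^ l) / 2"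
begin

abbreviation mean :: "nat \<Rightarrow> real" where
  "mean l \<equiv> real N / 2 ^ l"

lemma mean_antimono: "l \<le> l' \<Longrightarrow> mean l' \<le> mean l"
  by (intro divide_left_mono) (auto intro: power_increasing)

lemma Z_accurate:
  assumes "l \<le> Lv" "K / 2 \<le> mean l" "mean l < 4 * K"
  shows "\<bar>Z l * 2 ^ l - real N\<bar> \<le> e * real N"
proof -
  have "\<bar>Y l - mean l\<bar> \<le> e * mean l / 2" "C l \<le> e * mean l / 2" "Y l - C l \<le> Z l" "Z l \<le> Y l"
    using accurate few_collisions Z_bounds assms by auto
  moreover have "0 \<le> e * mean l" using e_pos by simp
  ultimately have "\<bar>Z l - mean l\<bar> * 2 ^ l \<le> e * mean l * 2 ^ l"
    by (intro mult_right_mono) (auto simp: abs_le_iff)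
  moreover have "\<bar>Z l - mean l\<bar> * 2 ^ l = \<bar>(Z l - mean l) * 2 ^ l\<bar>" by (simp add: abs_mult)
  moreover have "(Z l - mean l) * 2 ^ l = Z l * 2 ^ l - real N" by (simp add: left_diff_distrib)
  ultimately show ?thesis by simp
qed

text \<open>If \<open>N \<ge> 2K\<close>, the last level with mean at least \<open>2K\<close> has mean below \<open>4K\<close>, so its count is
  accurate and hence at least \<open>K\<close>; it lies beyond every level with mean at least \<open>4K\<close>.\<close>
lemma exists_level_reaching_threshold:
  assumes "2 * K \<le> real N"
  shows "\<exists>l1\<le>Lv. K \<le> Z l1 \<and> (\<forall>l\<le>Lv. 4 * K \<le> mean l \<longrightarrow> l < l1)"
proof -
  define S where "S = {l. l \<le> Lv \<and> 2 * K \<le> mean l}"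
  have "0 \<in> S" "finite S" unfolding S_def using assms by simp_all
  define l1 where "l1 = Max S"
  have l1S: "l1 \<in> S" and l1_max: "\<And>l. l \<in> S \<Longrightarrow> l \<le> l1"
    using \<open>0 \<in> S\<close> \<open>finite S\<close> unfolding l1_def by (auto intro: Max_in)
  have m2: "2 * K \<le> mean l1" and l1_le: "l1 \<le> Lv" using l1S unfolding S_def by auto
  have "mean Lv < 1" using N_less by simp
  have "l1 \<noteq> Lv"
  proof
    assume "l1 = Lv"
    with m2 have "2 * K \<le> mean Lv" by simp
    with \<open>mean Lv < 1\<close> K_ge show False by linarith
  qed
  hence "Suc l1 \<le> Lv" using l1_le by simp
  moreover have "Suc l1 \<notin> S" using l1_max by fastforce
  ultimately have "mean (Suc l1) < 2 * K" unfolding S_def by auto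
  hence m4: "mean l1 < 4 * K" by (simp add: field_simps)
  have "K / 2 \<le> mean l1" using m2 K_ge by linarith
  then have "\<bar>Y l1 - mean l1\<bar> \<le> e * mean l1 / 2"
    using accurate[OF l1_le _ m4] by simp
  moreover have "C l1 \<le> e * mean l1 / 2" "Y l1 - C l1 \<le> Z l1"
    using few_collisions[OF l1_le m4] Z_bounds[OF l1_le] by auto
  ultimately have "mean l1 - e * mean l1 \<le> Z l1" by linarith
  hence "(1 - e) * mean l1 \<le> Z l1" by (simp only: left_diff_distrib mult_1)
  moreover have "(1 / 2) * (2 * K) \<le> (1 - e) * mean l1" using e_le m2 K_ge by (intro mult_mono) auto
  ultimately have "K \<le> Z l1" by simp
  moreover have "l < l1" if "4 * K \<le> mean l" for l
  proof (rule ccontr)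
    assume "\<not> l < l1"
    then have "mean l \<le> mean l1" by (intro mean_antimono) simp
    with m4 that show False by linarith
  qed
  ultimately show ?thesis using l1_le by blast
qed

lemma chosen_level_accurate:
  "\<bar>Z (chosen_level Lv Z K) * 2 ^ chosen_level Lv Z K - real N\<bar> \<le> e * real N"
proof (cases "\<exists>l\<le>Lv. K \<le> Z l")
  case True
  define S where "S = {l. l \<le> Lv \<and> K \<le> Z l}"
  have "S \<noteq> {}" "finite S" using True unfolding S_def by auto
  then have lh_S: "Max S \<in> S" and lh_max: "\<And>l. l \<in> S \<Longrightarrow> l \<le> Max S"
    by (auto intro: Max_in)
  have lh: "chosen_level Lv Z K = Max S" unfolding chosen_level_def S_def using True by simp
  have lh_le: "Max S \<le> Lv" and "K \<le> Z (Max S)" using lh_S unfolding S_def by auto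
  hence "K \<le> Y (Max S)" using Z_bounds[OF lh_le] by auto
  hence m1: "K / 2 \<le> mean (Max S)" using sparse[OF lh_le] by fastforce
  have m2: "mean (Max S) < 4 * K"
  proof (rule ccontr)
    assume "\<not> mean (Max S) < 4 * K"
    moreover have "mean (Max S) \<le> mean 0" by (rule mean_antimono) simp
    ultimately obtain l1 where "l1 \<le> Lv" "K \<le> Z l1" "Max S < l1"
      using exists_level_reaching_threshold K_ge lh_le by fastforce
    then have "l1 \<in> S" "Max S < l1" unfolding S_def by auto
    thus False using lh_max by fastforce
  qed
  show ?thesis unfolding lh using Z_accurate[OF lh_le m1 m2] .
next
  case False
  hence "real N < 2 * K" using exists_level_reaching_threshold by force
  hence "C 0 \<le> e * real N / 2" using few_collisions[of 0] K_ge by simp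
  moreover have "Y 0 - C 0 \<le> Z 0" "Z 0 \<le> Y 0" using Z_bounds[of 0] by auto
  moreover have "0 \<le> e * real N" using e_pos by simp
  moreover have "chosen_level Lv Z K = 0" unfolding chosen_level_def using False by auto
  ultimately show ?thesis using Y_0 by (simp add: abs_le_iff)
qed

end

section \<open>The linear sketch\<close>

definition bucket_labels :: "nat \<Rightarrow> (nat \<Rightarrow> bool) set" where
  "bucket_labels b = {..<b} \<rightarrow>\<^sub>E UNIV"

lemma finite_bucket_labels [simp]: "finite (bucket_labels b)"
  unfolding bucket_labels_def by (intro finite_PiE) auto

lemma card_bucket_labels: "card (bucket_labels b) = 2 ^ b"
  unfolding bucket_labels_def by (subst card_PiE) auto

lemma bucket_in_labels: "bucket L b s i \<in> bucket_labels b"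
  unfolding bucket_def bucket_labels_def by simp

definition sketch :: "nat \<Rightarrow> nat \<Rightarrow> nat \<Rightarrow> seed \<Rightarrow> (nat \<Rightarrow> int) \<Rightarrow> nat \<times> (nat \<Rightarrow> bool) \<Rightarrow> int" where
  "sketch n L b s v = restrict (\<lambda>(l, \<beta>). \<Sum>i\<in>{1..n}. if sampled L s l i \<and> bucket L b s i = \<beta> then v i else 0)
                        ({..L} \<times> bucket_labels b)"

definition nonzero_buckets :: "nat \<Rightarrow> int \<Rightarrow> (nat \<times> (nat \<Rightarrow> bool) \<Rightarrow> int) \<Rightarrow> nat \<Rightarrow> nat" where
  "nonzero_buckets b q t l = card {\<beta>\<in>bucket_labels b. \<not> q dvd t (l, \<beta>)}"

context
  fixes n L b l :: nat and s :: seed and v :: "nat \<Rightarrow> int" and q :: int and T :: "nat set"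
  assumes l_le: "l \<le> L" and T_def: "T = {i\<in>{1..n}. \<not> q dvd v i}"
begin

lemma sketch_cong:
  assumes "\<beta> \<in> bucket_labels b"
  shows "q dvd sketch n L b s v (l, \<beta>) - (\<Sum>i\<in>{i\<in>T. sampled L s l i \<and> bucket L b s i = \<beta>}. v i)"
proof -
  let ?P = "\<lambda>i. sampled L s l i \<and> bucket L b s i = \<beta>"
  have "sketch n L b s v (l, \<beta>) = (\<Sum>i\<in>{1..n}. if ?P i then v i else 0)"
    using l_le assms unfolding sketch_def by simp
  also have "\<dots> = (\<Sum>i\<in>{i\<in>{1..n}. ?P i}. v i)"
    by (rule sum.inter_filter[symmetric]) simp
  also have "{i\<in>{1..n}. ?P i} = {i\<in>T. ?P i} \<union> {i\<in>{1..n}. ?P i \<and> q dvd v i}"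
    unfolding T_def by auto
  also have "(\<Sum>i\<in>\<dots>. v i) = (\<Sum>i\<in>{i\<in>T. ?P i}. v i) + (\<Sum>i\<in>{i\<in>{1..n}. ?P i \<and> q dvd v i}. v i)"
    by (intro sum.union_disjoint) (auto simp: T_def)
  finally have "sketch n L b s v (l, \<beta>) - (\<Sum>i\<in>{i\<in>T. ?P i}. v i) = (\<Sum>i\<in>{i\<in>{1..n}. ?P i \<and> q dvd v i}. v i)"
    by simp
  also have "q dvd \<dots>" by (intro dvd_sum) auto
  finally show ?thesis .
qed

lemma nonzero_buckets_le_level_count: "nonzero_buckets b q (sketch n L b s v) l \<le> level_count L s l T"
proof -
  have "{\<beta>\<in>bucket_labels b. \<not> q dvd sketch n L b s v (l, \<beta>)} \<subseteq> bucket L b s ` {i\<in>T. sampled L s l i}"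
  proof
    fix \<beta> assume \<beta>: "\<beta> \<in> {\<beta>\<in>bucket_labels b. \<not> q dvd sketch n L b s v (l, \<beta>)}"
    have "{i\<in>T. sampled L s l i \<and> bucket L b s i = \<beta>} \<noteq> {}"
    proof
      assume empty: "{i\<in>T. sampled L s l i \<and> bucket L b s i = \<beta>} = {}"
      show False using sketch_cong[of \<beta>, unfolded empty] \<beta> by simp
    qed
    then show "\<beta> \<in> bucket L b s ` {i\<in>T. sampled L s l i}" by auto
  qed
  then have "nonzero_buckets b q (sketch n L b s v) l \<le> card (bucket L b s ` {i\<in>T. sampled L s l i})"
    unfolding nonzero_buckets_def by (intro card_mono) (auto simp: T_def)
  also have "\<dots> \<le> level_count L s l T"
    unfolding level_count_def by (rule card_image_le) (auto simp: T_def)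
  finally show ?thesis .
qed

text \<open>Every sampled index of \<open>T\<close> that is alone in its bucket makes that bucket nonzero; the others
  are first components of collisions.\<close>
lemma level_count_le_nonzero_buckets_plus_collisions:
  "level_count L s l T \<le> nonzero_buckets b q (sketch n L b s v) l + collision_count L b s l T"
proof -
  define U where "U = {i\<in>T. sampled L s l i \<and> (\<forall>k\<in>T. sampled L s l k \<and> bucket L b s k = bucket L b s i \<longrightarrow> k = i)}"
  define Y where "Y = {i\<in>T. sampled L s l i}"
  define P where "P = {p\<in>T \<times> T. fst p \<noteq> snd p \<and> sampled L s l (fst p) \<and> sampled L s l (snd p)
                                 \<and> bucket L b s (fst p) = bucket L b s (snd p)}"
  have finite_T: "finite T" unfolding T_def by auto
  have U_Y: "U \<subseteq> Y" unfolding U_def Y_def by auto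
  have "bucket L b s ` U \<subseteq> {\<beta>\<in>bucket_labels b. \<not> q dvd sketch n L b s v (l, \<beta>)}"
  proof
    fix \<beta> assume "\<beta> \<in> bucket L b s ` U"
    then obtain i where i: "i \<in> U" and \<beta>: "\<beta> = bucket L b s i" by auto
    then have "{k\<in>T. sampled L s l k \<and> bucket L b s k = \<beta>} = {i}" unfolding U_def by auto
    moreover have "\<not> q dvd v i" using i unfolding U_def T_def by auto
    ultimately have "q dvd sketch n L b s v (l, \<beta>) - v i" "\<not> q dvd v i"
      using sketch_cong[of \<beta>] bucket_in_labels \<beta> by auto
    then have "\<not> q dvd sketch n L b s v (l, \<beta>)"
      using dvd_diff[of q "sketch n L b s v (l, \<beta>)" "sketch n L b s v (l, \<beta>) - v i"] by auto
    then show "\<beta> \<in> {\<beta>\<in>bucket_labels b. \<not> q dvd sketch n L b s v (l, \<beta>)}"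
      using \<beta> bucket_in_labels by auto
  qed
  moreover have "inj_on (bucket L b s) U" unfolding U_def by (auto intro: inj_onI)
  ultimately have card_U: "card U \<le> nonzero_buckets b q (sketch n L b s v) l"
    unfolding nonzero_buckets_def by (intro card_inj_on_le) auto
  have finite_P: "finite P" unfolding P_def using finite_T by simp
  have "Y - U \<subseteq> fst ` P"
  proof
    fix i assume "i \<in> Y - U"
    then obtain k where "k \<in> T" "sampled L s l k" "bucket L b s k = bucket L b s i" "k \<noteq> i"
      unfolding U_def Y_def by auto
    then have "(i, k) \<in> P" using \<open>i \<in> Y - U\<close> unfolding P_def Y_def by auto
    then show "i \<in> fst ` P" by force
  qed
  then have "card (Y - U) \<le> card P"
    using card_mono[OF finite_imageI[OF finite_P]] card_image_le[OF finite_P] le_trans by blast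
  moreover have "card Y = card U + card (Y - U)"
  proof -
    have "finite Y" unfolding Y_def using finite_T by simp
    then show ?thesis using U_Y by (simp add: card_Diff_subset card_mono finite_subset)
  qed
  ultimately show ?thesis
    using card_U unfolding level_count_def collision_count_def Y_def[symmetric] P_def[symmetric] by linarith
qed

end

section \<open>A dyadic expansion of the sum\<close>

lemma pow2_dvd_iff_le_low_bit:
  assumes "m > 0"
  shows "(2::nat) ^ t dvd m \<longleftrightarrow> t \<le> low_bit m"
proof -
  have "\<exists>j. bit m j" using bit_eq_iff[of m 0] assms by auto
  then have "(\<forall>j<t. \<not> bit m j) \<longleftrightarrow> t \<le> (LEAST j. bit m j)"
    by (metis LeastI_ex not_less_Least leI le_less_trans less_le_not_le)
  moreover have "take_bit t m = 0 \<longleftrightarrow> (\<forall>j<t. \<not> bit m j)" by (auto simp: bit_eq_iff bit_take_bit_iff)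
  moreover have "low_bit m = (LEAST j. bit m j)" unfolding low_bit_def bit_iff_odd ..
  ultimately show ?thesis by (simp add: take_bit_eq_0_iff)
qed

lemma dyadic_tail_sum:
  "k \<le> J \<Longrightarrow> (\<Sum>j<J. if k \<le> j then 1 / 2 ^ (j + 1) else 0) + 1 / 2 ^ J = (1 / 2 ^ k :: real)"
proof (induction J)
  case (Suc J)
  show ?case
  proof (cases "k \<le> J")
    case True
    then show ?thesis using Suc.IH by simp
  next
    case False
    hence "k = Suc J" using Suc.prems by simp
    moreover have "(\<Sum>j<Suc J. if k \<le> j then 1 / 2 ^ (j + 1) else (0::real)) = 0"
      using \<open>k = Suc J\<close> by (intro sum.neutral) auto
    ultimately show ?thesis by simp
  qed
qed simp

text \<open>\<open>g_np |x| = 2^-k\<close> with \<open>2^k\<close> the largest power of two dividing \<open>x\<close>, which is the sum of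
  \<open>2^-(j+1)\<close> over the \<open>j \<ge> k\<close>, i.e. over the \<open>j\<close> with \<open>2^(j+1)\<close> not dividing \<open>x\<close>.\<close>
lemma g_np_dyadic_expansion:
  fixes x :: int
  assumes "\<bar>x\<bar> < 2 ^ J"
  shows "g_np (nat \<bar>x\<bar>) = (\<Sum>j<J. of_bool (\<not> 2 ^ (j + 1) dvd x) / 2 ^ (j + 1)) + of_bool (\<not> 2 ^ (J + 1) dvd x) / 2 ^ J"
proof (cases "x = 0")
  case True
  then show ?thesis by (simp add: g_np_def)
next
  case False
  define m where "m = nat \<bar>x\<bar>"
  have m_pos: "m > 0" using False unfolding m_def by simp
  have m_less: "m < 2 ^ J" using assms unfolding m_def by (simp add: nat_less_iff)
  define k where "k = low_bit m"
  have dvd_x: "(2::int) ^ t dvd x \<longleftrightarrow> t \<le> k" for t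
  proof -
    have "(2::int) ^ t dvd x \<longleftrightarrow> (2::nat) ^ t dvd m"
      unfolding m_def by (metis dvd_abs_iff int_dvd_int_iff int_nat_eq abs_ge_zero of_nat_numeral of_nat_power)
    then show ?thesis unfolding k_def using pow2_dvd_iff_le_low_bit[OF m_pos] by simp
  qed
  have "(2::nat) ^ k \<le> m" using dvd_imp_le m_pos pow2_dvd_iff_le_low_bit[OF m_pos] unfolding k_def by blast
  hence k_less: "k < J" using m_less by (metis le_less_trans nat_power_less_imp_less zero_less_numeral)
  have "(\<Sum>j<J. of_bool (\<not> 2 ^ (j + 1) dvd x) / 2 ^ (j + 1)) + of_bool (\<not> 2 ^ (J + 1) dvd x) / (2::real) ^ J
      = (\<Sum>j<J. if k \<le> j then 1 / 2 ^ (j + 1) else 0) + 1 / 2 ^ J"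
    using k_less by (intro arg_cong2[where f = "(+)"] sum.cong refl) (simp_all only: dvd_x, auto)
  also have "\<dots> = 1 / 2 ^ k" using k_less by (intro dyadic_tail_sum) simp
  also have "\<dots> = g_np (nat \<bar>x\<bar>)" unfolding g_np_def k_def m_def[symmetric] using m_pos
    by (simp add: powr_minus powr_realpow divide_inverse)
  finally show ?thesis by simp
qed

lemma gsum_g_np_dyadic:
  fixes v :: "nat \<Rightarrow> int"
  assumes "\<And>i. i \<in> {1..n} \<Longrightarrow> \<bar>v i\<bar> < 2 ^ J"
  shows "gsum g_np n v = (\<Sum>j<J. real (card {i\<in>{1..n}. \<not> 2 ^ (j + 1) dvd v i}) / 2 ^ (j + 1))
            + real (card {i\<in>{1..n}. \<not> 2 ^ (J + 1) dvd v i}) / 2 ^ J"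
proof -
  have "gsum g_np n v = (\<Sum>i\<in>{1..n}. (\<Sum>j<J. of_bool (\<not> 2 ^ (j + 1) dvd v i) / 2 ^ (j + 1))
                                        + of_bool (\<not> 2 ^ (J + 1) dvd v i) / 2 ^ J)"
    unfolding gsum_def by (intro sum.cong refl g_np_dyadic_expansion assms) auto
  also have "\<dots> = (\<Sum>j<J. \<Sum>i\<in>{1..n}. of_bool (\<not> 2 ^ (j + 1) dvd v i) / 2 ^ (j + 1))
                 + (\<Sum>i\<in>{1..n}. of_bool (\<not> 2 ^ (J + 1) dvd v i) / 2 ^ J)"
    by (simp only: sum.distrib sum.swap[of _ "{1..n}"])
  finally show ?thesis
    by (simp only: sum_divide_distrib[symmetric] card_filter_eq_sum_of_bool[OF finite_atLeastAtMost])
qed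

lemma gsum_g_np_nonneg: "0 \<le> gsum g_np n v"
  unfolding gsum_def g_np_def by (intro sum_nonneg) auto

section \<open>The estimator\<close>

definition count_estimate :: "nat \<Rightarrow> nat \<Rightarrow> real \<Rightarrow> (nat \<times> (nat \<Rightarrow> bool) \<Rightarrow> int) \<Rightarrow> nat \<Rightarrow> real" where
  "count_estimate L b K t j =
     (let Z = \<lambda>l. real (nonzero_buckets b (2 ^ (j + 1)) t l); l = chosen_level L Z K in Z l * 2 ^ l)"

definition g_np_estimate :: "nat \<Rightarrow> nat \<Rightarrow> real \<Rightarrow> (nat \<times> (nat \<Rightarrow> bool) \<Rightarrow> int) \<Rightarrow> real" where
  "g_np_estimate L b K t = (\<Sum>j<L. count_estimate L b K t j / 2 ^ (j + 1)) + count_estimate L b K t L / 2 ^ L"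

lemma count_estimate_accurate:
  fixes v :: "nat \<Rightarrow> int"
  assumes e: "0 < e" "e \<le> 1/2" and K: "1 \<le> K" and n_less: "n < 2 ^ L" and "j \<le> L"
    and T_def: "T = {i\<in>{1..n}. \<not> (2::int) ^ (j + 1) dvd v i}"
    and good: "\<And>l. l \<le> L \<Longrightarrow> good_level L b T e K l s"
  shows "\<bar>count_estimate L b K (sketch n L b s v) j - real (card T)\<bar> \<le> e * real (card T)"
proof -
  have "card T \<le> card {1..n}" unfolding T_def by (intro card_mono) auto
  then have "card T \<le> n" by simp
  with n_less have "real (card T) < 2 ^ L" by (metis of_nat_less_iff of_nat_numeral of_nat_power le_less_trans)
  then interpret level_estimate L "card T" K e "\<lambda>l. real (level_count L s l T)"
      "\<lambda>l. real (nonzero_buckets b (2 ^ (j + 1)) (sketch n L b s v) l)" "\<lambda>l. real (collision_count L b s l T)"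
  proof unfold_locales
    show "0 < e" "e \<le> 1/2" "1 \<le> K" using e K by auto
    show "real (level_count L s 0 T) = real (card T)" by (simp add: level_count_def)
    fix l assume l: "l \<le> L"
    note good_l = good[OF l, unfolded good_level_def Let_def]
    show "real (level_count L s l T) < K" if "real (card T) / 2 ^ l < K / 2"
      using good_l that by blast
    show "\<bar>real (level_count L s l T) - real (card T) / 2 ^ l\<bar> \<le> e * (real (card T) / 2 ^ l) / 2"
      if "K / 2 \<le> real (card T) / 2 ^ l" "real (card T) / 2 ^ l < 4 * K"
      using good_l that by auto
    show "real (collision_count L b s l T) \<le> e * (real (card T) / 2 ^ l) / 2"
      if "real (card T) / 2 ^ l < 4 * K"
      using good_l that by auto
    show "real (level_count L s l T) - real (collision_count L b s l T)
            \<le> real (nonzero_buckets b (2 ^ (j + 1)) (sketch n L b s v) l) \<and>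
          real (nonzero_buckets b (2 ^ (j + 1)) (sketch n L b s v) l) \<le> real (level_count L s l T)"
    proof -
      have "nonzero_buckets b (2 ^ (j + 1)) (sketch n L b s v) l \<le> level_count L s l T"
        "level_count L s l T \<le> nonzero_buckets b (2 ^ (j + 1)) (sketch n L b s v) l + collision_count L b s l T"
        using nonzero_buckets_le_level_count[OF l T_def, where b = b and s = s]
          level_count_le_nonzero_buckets_plus_collisions[OF l T_def, where b = b and s = s] by auto
      then show ?thesis by (metis of_nat_add of_nat_le_iff diff_le_eq)
    qed
  qed
  show ?thesis using chosen_level_accurate unfolding count_estimate_def Let_def .
qed

lemma g_np_estimate_accurate:
  fixes v :: "nat \<Rightarrow> int" and n :: nat and e :: real
  defines "N \<equiv> \<lambda>j. real (card {i\<in>{1..n}. \<not> (2::int) ^ (j + 1) dvd v i})"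
  assumes v_less: "\<And>i. i \<in> {1..n} \<Longrightarrow> \<bar>v i\<bar> < 2 ^ L" and "0 \<le> e"
    and accurate: "\<And>j. j \<le> L \<Longrightarrow> \<bar>count_estimate L b K t j - N j\<bar> \<le> e * N j"
  shows "\<bar>g_np_estimate L b K t - gsum g_np n v\<bar> \<le> e * gsum g_np n v"
proof -
  define d where "d = (\<lambda>j. count_estimate L b K t j - N j)"
  have g: "gsum g_np n v = (\<Sum>j<L. N j / 2 ^ (j + 1)) + N L / 2 ^ L"
    unfolding N_def by (rule gsum_g_np_dyadic[OF v_less])
  have "\<bar>g_np_estimate L b K t - gsum g_np n v\<bar> = \<bar>(\<Sum>j<L. d j / 2 ^ (j + 1)) + d L / 2 ^ L\<bar>"
    unfolding g_np_estimate_def g d_def by (simp add: sum_subtractf diff_divide_distrib)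
  also have "\<dots> \<le> (\<Sum>j<L. \<bar>d j\<bar> / 2 ^ (j + 1)) + \<bar>d L\<bar> / 2 ^ L"
    by (rule order_trans[OF abs_triangle_ineq add_mono[OF order_trans[OF sum_abs]]]) (simp_all add: abs_divide)
  also have "\<dots> \<le> (\<Sum>j<L. e * N j / 2 ^ (j + 1)) + e * N L / 2 ^ L"
    using accurate unfolding d_def by (intro add_mono sum_mono divide_right_mono) auto
  also have "\<dots> = e * gsum g_np n v" unfolding g by (simp add: sum_distrib_left algebra_simps)
  finally show ?thesis .
qed

lemma g_np_estimate_accurate_if_good_levels:
  fixes v :: "nat \<Rightarrow> int"
  assumes e: "0 < e" "e \<le> 1/2" and K: "1 \<le> K" and n_less: "n < 2 ^ L"
    and v_less: "\<And>i. \<bar>v i\<bar> < 2 ^ L"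
    and good: "\<And>j l. j \<le> L \<Longrightarrow> l \<le> L \<Longrightarrow> good_level L b {i\<in>{1..n}. \<not> (2::int) ^ (j + 1) dvd v i} e K l s"
  shows "\<bar>g_np_estimate L b K (sketch n L b s v) - gsum g_np n v\<bar> \<le> e * gsum g_np n v"
proof (rule g_np_estimate_accurate[OF v_less])
  show "0 \<le> e" using e by simp
  fix j assume j: "j \<le> L"
  show "\<bar>count_estimate L b K (sketch n L b s v) j - real (card {i\<in>{1..n}. \<not> (2::int) ^ (j + 1) dvd v i})\<bar>
          \<le> e * real (card {i\<in>{1..n}. \<not> (2::int) ^ (j + 1) dvd v i})"
    using count_estimate_accurate[OF e K n_less j refl] good[OF j] by blast
qed

text \<open>A union bound over the \<open>(L + 1)^2\<close> pairs of a count index and a level.\<close>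
lemma card_inaccurate_seeds:
  fixes v :: "nat \<Rightarrow> int" and e K :: real
  assumes e: "0 < e" "e \<le> 1/2" and K: "1 \<le> K" and "1 \<le> n" "1 \<le> M" and nM_less: "n * M < 2 ^ L"
    and v_bound: "\<forall>i. \<bar>v i\<bar> \<le> int M"
    and param: "real ((L + 1) ^ 2) * (2 / K + 8 / (e ^ 2 * K) + 8 * K / (e * 2 ^ b)) \<le> 1/3"
  shows "real (card {s\<in>hash_seeds L (L + b).
            \<not> \<bar>g_np_estimate L b K (sketch n L b s v) - gsum g_np n v\<bar> \<le> e * gsum g_np n v})
     \<le> real (card (hash_seeds L (L + b))) / 3"
proof -
  let ?S = "hash_seeds L (L + b)"
  let ?bad = "2 / K + 8 / (e ^ 2 * K) + 8 * K / (e * 2 ^ b)"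
  define T where "T = (\<lambda>j. {i\<in>{1..n}. \<not> (2::int) ^ (j + 1) dvd v i})"
  define Bad where "Bad = (\<lambda>p. {s\<in>?S. \<not> good_level L b (T (fst p)) e K (snd p) s})"
  have "n \<le> n * M" "M \<le> n * M" using \<open>1 \<le> n\<close> \<open>1 \<le> M\<close> by simp_all
  then have n_less: "n < 2 ^ L" and "M < 2 ^ L" using nM_less by linarith+
  then have "int M < 2 ^ L" by (metis of_nat_less_iff of_nat_numeral of_nat_power)
  then have v_less: "\<bar>v i\<bar> < 2 ^ L" for i using v_bound le_less_trans by blast
  have "{s\<in>?S. \<not> \<bar>g_np_estimate L b K (sketch n L b s v) - gsum g_np n v\<bar> \<le> e * gsum g_np n v}
          \<subseteq> (\<Union>p\<in>{..L} \<times> {..L}. Bad p)"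
  proof (rule subsetI, rule ccontr)
    fix s assume s: "s \<in> {s\<in>?S. \<not> \<bar>g_np_estimate L b K (sketch n L b s v) - gsum g_np n v\<bar> \<le> e * gsum g_np n v}"
      and "s \<notin> (\<Union>p\<in>{..L} \<times> {..L}. Bad p)"
    then have "\<And>j l. j \<le> L \<Longrightarrow> l \<le> L \<Longrightarrow> good_level L b (T j) e K l s" unfolding Bad_def by auto
    then have "\<bar>g_np_estimate L b K (sketch n L b s v) - gsum g_np n v\<bar> \<le> e * gsum g_np n v"
      unfolding T_def by (rule g_np_estimate_accurate_if_good_levels[where v = v, OF e K n_less v_less])
    then show False using s by simp
  qed
  then have "card {s\<in>?S. \<not> \<bar>g_np_estimate L b K (sketch n L b s v) - gsum g_np n v\<bar> \<le> e * gsum g_np n v}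
      \<le> (\<Sum>p\<in>{..L} \<times> {..L}. card (Bad p))"
    by (intro order_trans[OF card_mono card_UN_le]) (auto simp: Bad_def)
  then have "real (card {s\<in>?S. \<not> \<bar>g_np_estimate L b K (sketch n L b s v) - gsum g_np n v\<bar> \<le> e * gsum g_np n v})
      \<le> (\<Sum>p\<in>{..L} \<times> {..L}. real (card (Bad p)))"
    by (simp only: of_nat_sum[symmetric] of_nat_le_iff)
  also have "\<dots> \<le> (\<Sum>p\<in>{..L} \<times> {..L}. real (card ?S) * ?bad)"
  proof (intro sum_mono)
    fix p assume "p \<in> {..L} \<times> {..L}"
    moreover have "finite (T (fst p))" "T (fst p) \<subseteq> {..<2 ^ L}" unfolding T_def using n_less by auto
    ultimately show "real (card (Bad p)) \<le> real (card ?S) * ?bad"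
      unfolding Bad_def using card_not_good_level[of "snd p" L "T (fst p)" e K b] e K by auto
  qed
  also have "\<dots> = real (card ?S) * (real ((L + 1) ^ 2) * ?bad)"
    by (simp add: card_cartesian_product power2_eq_square)
  also have "\<dots> \<le> real (card ?S) * (1/3)" using param by (intro mult_left_mono) auto
  finally show ?thesis by simp
qed

section \<open>Streaming algorithms from linear sketches\<close>

lemma freq_Nil: "freq [] = (\<lambda>_. 0)"
  unfolding freq_def by auto

lemma freq_snoc: "freq (D @ [x]) i = freq D i + (if fst x = i then snd x else 0)"
  unfolding freq_def by simp

definition prefix_bounded :: "nat \<Rightarrow> stream \<Rightarrow> bool" where
  "prefix_bounded M D \<longleftrightarrow> (\<forall>k\<le>length D. \<forall>i. \<bar>freq (take k D) i\<bar> \<le> int M)"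

lemma prefix_bounded_butlast: "prefix_bounded M (D @ [x]) \<Longrightarrow> prefix_bounded M D"
  unfolding prefix_bounded_def by (metis le_SucI length_append_singleton take_append take_all_iff diff_is_0_eq append_Nil2 take_0)

lemma prefix_bounded_take: "prefix_bounded M D \<Longrightarrow> prefix_bounded M (take k D)"
  unfolding prefix_bounded_def by (auto simp: min_def)

lemma prefix_bounded_freq: "prefix_bounded M D \<Longrightarrow> \<bar>freq D i\<bar> \<le> int M"
  unfolding prefix_bounded_def by (metis order_refl take_all)

definition sketch_alg :: "('s \<times> 't \<Rightarrow> bool list) \<Rightarrow> (bool list \<Rightarrow> 's \<times> 't) \<Rightarrow> 's set \<Rightarrow>
    ('s \<Rightarrow> (nat \<Rightarrow> int) \<Rightarrow> 't) \<Rightarrow> ('s \<Rightarrow> 't \<Rightarrow> nat \<times> int \<Rightarrow> 't) \<Rightarrow> ('s \<Rightarrow> 't \<Rightarrow> real) \<Rightarrow> alg" where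
  "sketch_alg enc dec S sk up est =
     Alg (map_pmf (\<lambda>s. enc (s, sk s (\<lambda>_. 0))) (pmf_of_set S))
         (\<lambda>x u. return_pmf (enc (fst (dec x), up (fst (dec x)) (snd (dec x)) u)))
         (\<lambda>x. return_pmf (est (fst (dec x)) (snd (dec x))))"

locale sketch_implementation =
  fixes S :: "'s set" and sk :: "'s \<Rightarrow> (nat \<Rightarrow> int) \<Rightarrow> 't" and up :: "'s \<Rightarrow> 't \<Rightarrow> nat \<times> int \<Rightarrow> 't"
    and est :: "'s \<Rightarrow> 't \<Rightarrow> real" and Bd :: "('s \<times> 't) set"
    and enc :: "'s \<times> 't \<Rightarrow> bool list" and dec :: "bool list \<Rightarrow> 's \<times> 't" and M :: nat
  assumes finite_S: "finite S" and S_nonempty: "S \<noteq> {}"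
    and dec_enc: "\<And>a. a \<in> Bd \<Longrightarrow> dec (enc a) = a"
    and sk_snoc: "\<And>s D x. s \<in> S \<Longrightarrow> sk s (freq (D @ [x])) = up s (sk s (freq D)) x"
    and sk_bounded: "\<And>s v. s \<in> S \<Longrightarrow> (\<forall>i. \<bar>v i\<bar> \<le> int M) \<Longrightarrow> (s, sk s v) \<in> Bd"
begin

lemma run_sketch_alg:
  "prefix_bounded M D \<Longrightarrow> run (sketch_alg enc dec S sk up est) D = map_pmf (\<lambda>s. enc (s, sk s (freq D))) (pmf_of_set S)"
proof (induction D rule: rev_induct)
  case Nil
  then show ?case unfolding sketch_alg_def by (simp add: freq_Nil)
next
  case (snoc x D)
  have D_bounded: "prefix_bounded M D" using prefix_bounded_butlast[OF snoc.prems] .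
  have dec_enc_D: "dec (enc (s, sk s (freq D))) = (s, sk s (freq D))" if "s \<in> S" for s
    using that sk_bounded prefix_bounded_freq[OF D_bounded] dec_enc by blast
  have "run (sketch_alg enc dec S sk up est) (D @ [x])
      = bind_pmf (run (sketch_alg enc dec S sk up est) D)
          (\<lambda>st. return_pmf (enc (fst (dec st), up (fst (dec st)) (snd (dec st)) x)))"
    by (simp add: sketch_alg_def)
  also have "\<dots> = bind_pmf (pmf_of_set S) (\<lambda>s. return_pmf (enc (s, sk s (freq (D @ [x])))))"
    unfolding snoc.IH[OF D_bounded] bind_map_pmf
    by (intro bind_pmf_cong refl) (simp add: dec_enc_D sk_snoc set_pmf_of_set[OF S_nonempty finite_S])
  finally show ?case by (simp add: map_pmf_def)
qed

lemma alg_output_def_eq: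
  "alg_output (sketch_alg enc dec S sk up est) D
     = bind_pmf (run (sketch_alg enc dec S sk up est) D) (\<lambda>x. return_pmf (est (fst (dec x)) (snd (dec x))))"
  unfolding sketch_alg_def by simp

lemma alg_output_sketch_alg:
  "prefix_bounded M D \<Longrightarrow> alg_output (sketch_alg enc dec S sk up est) D = map_pmf (\<lambda>s. est s (sk s (freq D))) (pmf_of_set S)"
proof -
  assume D_bounded: "prefix_bounded M D"
  have dec_enc_D: "dec (enc (s, sk s (freq D))) = (s, sk s (freq D))" if "s \<in> S" for s
    using that sk_bounded prefix_bounded_freq[OF D_bounded] dec_enc by blast
  show ?thesis
    unfolding alg_output_def_eq run_sketch_alg[OF D_bounded] bind_map_pmf map_pmf_def[of "\<lambda>s. est s (sk s (freq D))"]
    by (intro bind_pmf_cong refl) (simp add: dec_enc_D set_pmf_of_set[OF S_nonempty finite_S])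
qed

end

lemma exists_encoding:
  assumes "finite Bd" "card Bd \<le> 2 ^ W"
  obtains enc :: "'a \<Rightarrow> bool list" and dec where "\<And>a. a \<in> Bd \<Longrightarrow> dec (enc a) = a \<and> length (enc a) = W"
proof -
  define B where "B = {xs :: bool list. set xs \<subseteq> UNIV \<and> length xs = W}"
  have "finite B" unfolding B_def using finite_lists_length_eq[of "UNIV :: bool set" W] by simp
  moreover have "card B = 2 ^ W"
    unfolding B_def using card_lists_length_eq[of "UNIV :: bool set" W] by (simp add: card_UNIV_bool)
  ultimately obtain enc :: "'a \<Rightarrow> bool list" where "enc ` Bd \<subseteq> B" "inj_on enc Bd"
    using card_le_inj[OF assms(1), of B] assms(2) by auto
  show ?thesis
  proof (rule that)
    fix a assume "a \<in> Bd"
    then show "the_inv_into Bd enc (enc a) = a \<and> length (enc a) = W"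
      using \<open>enc ` Bd \<subseteq> B\<close> \<open>inj_on enc Bd\<close> unfolding B_def by (auto simp: the_inv_into_f_f)
  qed
qed

lemma measure_estimate_within:
  fixes f :: "'s \<Rightarrow> real"
  assumes "finite S" "S \<noteq> {}"
  shows "measure_pmf.prob (map_pmf f (pmf_of_set S)) {G. (1 - eps) * g \<le> G \<and> G \<le> (1 + eps) * g}
       = real (card {s\<in>S. \<bar>f s - g\<bar> \<le> eps * g}) / real (card S)"
proof -
  have "S \<inter> f -` {G. (1 - eps) * g \<le> G \<and> G \<le> (1 + eps) * g} = {s\<in>S. \<bar>f s - g\<bar> \<le> eps * g}"
    by (auto simp: abs_le_iff algebra_simps)
  then show ?thesis by (simp add: measure_map_pmf measure_pmf_of_set[OF assms(2,1)])
qed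

lemma solves_sum_by_sketch:
  fixes S :: "'s set" and sk :: "'s \<Rightarrow> (nat \<Rightarrow> int) \<Rightarrow> 't" and up :: "'s \<Rightarrow> 't \<Rightarrow> nat \<times> int \<Rightarrow> 't"
    and est :: "'s \<Rightarrow> 't \<Rightarrow> real" and Bd :: "('s \<times> 't) set"
  assumes "finite S" "S \<noteq> {}" "finite Bd" "card Bd \<le> 2 ^ W" "real W \<le> bits"
    and sk_snoc: "\<And>s D x. s \<in> S \<Longrightarrow> sk s (freq (D @ [x])) = up s (sk s (freq D)) x"
    and sk_bounded: "\<And>s v. s \<in> S \<Longrightarrow> (\<forall>i. \<bar>v i\<bar> \<le> int M) \<Longrightarrow> (s, sk s v) \<in> Bd"
    and accurate: "\<And>v. \<forall>i. \<bar>v i\<bar> \<le> int M \<Longrightarrow>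
                     2/3 * real (card S) \<le> real (card {s\<in>S. \<bar>est s (sk s v) - gsum g n v\<bar> \<le> eps * gsum g n v})"
  shows "\<exists>A. solves_sum g eps n M A bits"
proof -
  obtain enc :: "'s \<times> 't \<Rightarrow> bool list" and dec where code: "\<And>a. a \<in> Bd \<Longrightarrow> dec (enc a) = a \<and> length (enc a) = W"
    using exists_encoding[OF assms(3,4)] by metis
  have dec_enc: "\<And>a. a \<in> Bd \<Longrightarrow> dec (enc a) = a" using code by blast
  let ?A = "sketch_alg enc dec S sk up est"
  interpret sketch_implementation S sk up est Bd enc dec M
    using assms(1,2) dec_enc sk_snoc sk_bounded by unfold_locales auto
  have "solves_sum g eps n M ?A bits"
    unfolding solves_sum_def
  proof (intro allI impI)
    fix D assume "valid_stream n M D"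
    then have D_bounded: "prefix_bounded M D" unfolding valid_stream_def prefix_bounded_def by blast
    have space: "\<forall>k\<le>length D. \<forall>st\<in>set_pmf (run ?A (take k D)). real (length st) \<le> bits"
    proof (intro allI impI ballI)
      fix k st assume "st \<in> set_pmf (run ?A (take k D))"
      then obtain s where "s \<in> S" and st: "st = enc (s, sk s (freq (take k D)))"
        using run_sketch_alg[OF prefix_bounded_take[OF D_bounded]] code
          set_pmf_of_set[OF assms(2,1)] by auto
      then have "(s, sk s (freq (take k D))) \<in> Bd"
        using sk_bounded prefix_bounded_freq[OF prefix_bounded_take[OF D_bounded]] by blast
      then show "real (length st) \<le> bits" using st code assms(5) by simp
    qed
    have "2/3 \<le> real (card {s\<in>S. \<bar>est s (sk s (freq D)) - gsum g n (freq D)\<bar> \<le> eps * gsum g n (freq D)})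
                 / real (card S)"
    proof -
      have "\<forall>i. \<bar>freq D i\<bar> \<le> int M" using prefix_bounded_freq[OF D_bounded] by blast
      moreover have "real (card S) > 0" using assms(1,2) by (simp add: card_gt_0_iff)
      ultimately show ?thesis using accurate by (simp add: field_simps)
    qed
    then have prob: "2/3 \<le> measure_pmf.prob (alg_output ?A D)
                 {G. (1 - eps) * gsum g n (freq D) \<le> G \<and> G \<le> (1 + eps) * gsum g n (freq D)}"
      using alg_output_sketch_alg[OF D_bounded] measure_estimate_within[OF assms(1,2)] by simp
    from space prob show "(\<forall>k\<le>length D. \<forall>st\<in>set_pmf (run ?A (take k D)). real (length st) \<le> bits) \<and>
      2/3 \<le> measure_pmf.prob (alg_output ?A D)
                 {G. (1 - eps) * gsum g n (freq D) \<le> G \<and> G \<le> (1 + eps) * gsum g n (freq D)}" ..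
  qed
  then show ?thesis by blast
qed

section \<open>The one-pass algorithms for g_np\<close>

definition sketch_update :: "nat \<Rightarrow> nat \<Rightarrow> nat \<Rightarrow> seed \<Rightarrow> (nat \<times> (nat \<Rightarrow> bool) \<Rightarrow> int) \<Rightarrow> nat \<times> int \<Rightarrow>
    nat \<times> (nat \<Rightarrow> bool) \<Rightarrow> int" where
  "sketch_update n L b s t u = restrict (\<lambda>(l, \<beta>). t (l, \<beta>)
      + (if fst u \<in> {1..n} \<and> sampled L s l (fst u) \<and> bucket L b s (fst u) = \<beta> then snd u else 0))
    ({..L} \<times> bucket_labels b)"

lemma sum_if_add_delta:
  assumes "finite A"
  shows "(\<Sum>i\<in>A. if c i then f i + (if a = i then d else 0) else 0)
       = (\<Sum>i\<in>A. if c i then f i else 0) + (if a \<in> A \<and> c a then d else (0::int))"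
proof -
  have "(\<Sum>i\<in>A. if c i then f i + (if a = i then d else 0) else 0)
      = (\<Sum>i\<in>A. (if c i then f i else 0) + (if a = i then (if c a then d else 0) else 0))"
    by (intro sum.cong refl) auto
  also have "\<dots> = (\<Sum>i\<in>A. if c i then f i else 0) + (if a \<in> A then (if c a then d else 0) else 0)"
    using assms by (simp add: sum.distrib sum.delta')
  finally show ?thesis by simp
qed

lemma sketch_snoc: "sketch n L b s (freq (D @ [x])) = sketch_update n L b s (sketch n L b s (freq D)) x"
  unfolding sketch_def sketch_update_def
proof (rule restrict_ext)
  fix p assume "p \<in> {..L} \<times> bucket_labels b"
  then show "(case p of (l, \<beta>) \<Rightarrow> \<Sum>i\<in>{1..n}. if sampled L s l i \<and> bucket L b s i = \<beta> then freq (D @ [x]) i else 0)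
    = (case p of (l, \<beta>) \<Rightarrow> restrict (\<lambda>(l, \<beta>). \<Sum>i\<in>{1..n}. if sampled L s l i \<and> bucket L b s i = \<beta> then freq D i else 0)
          ({..L} \<times> bucket_labels b) (l, \<beta>)
        + (if fst x \<in> {1..n} \<and> sampled L s l (fst x) \<and> bucket L b s (fst x) = \<beta> then snd x else 0))"
    by (cases p) (simp only: freq_snoc prod.case restrict_apply' sum_if_add_delta finite_atLeastAtMost)
qed

lemma sketch_in_range:
  assumes "\<forall>i. \<bar>v i\<bar> \<le> int M"
  shows "sketch n L b s v \<in> ({..L} \<times> bucket_labels b) \<rightarrow>\<^sub>E {- int (n * M)..int (n * M)}"
proof -
  have "\<bar>\<Sum>i\<in>{1..n}. if sampled L s l i \<and> bucket L b s i = \<beta> then v i else 0\<bar> \<le> int (n * M)" for l \<beta>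
  proof -
    have "\<bar>\<Sum>i\<in>{1..n}. if sampled L s l i \<and> bucket L b s i = \<beta> then v i else 0\<bar>
        \<le> (\<Sum>i\<in>{1..n}. \<bar>if sampled L s l i \<and> bucket L b s i = \<beta> then v i else 0\<bar>)"
      by (rule sum_abs)
    also have "\<dots> \<le> (\<Sum>i\<in>{1..n}. int M)" using assms by (intro sum_mono) auto
    finally show ?thesis by simp
  qed
  then have "(\<Sum>i\<in>{1..n}. if sampled L s l i \<and> bucket L b s i = \<beta> then v i else 0) \<in> {- int (n * M)..int (n * M)}"
    for l \<beta> by (metis abs_le_D1 abs_le_D2 atLeastAtMost_iff minus_le_iff)
  then show ?thesis unfolding sketch_def by (auto simp: PiE_iff)
qed

lemma card_int_interval: "card {- int N..int N} = 2 * N + 1"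
  by (simp add: card_atLeastAtMost_int; presburger)

lemma card_sketch_states:
  assumes "n * M < 2 ^ L"
  shows "card (hash_seeds L (L + b) \<times> (({..L} \<times> bucket_labels b) \<rightarrow>\<^sub>E {- int (n * M)..int (n * M)}))
       \<le> 2 ^ ((L + 1) * (L + b) + (L + 1) * 2 ^ b * (L + 1))"
proof -
  have "card {- int (n * M)..int (n * M)} = 2 * (n * M) + 1" by (rule card_int_interval)
  moreover have "card ({..L} \<times> bucket_labels b) = (L + 1) * 2 ^ b"
    by (simp add: card_cartesian_product card_bucket_labels)
  ultimately have "card (({..L} \<times> bucket_labels b) \<rightarrow>\<^sub>E {- int (n * M)..int (n * M)}) = (2 * (n * M) + 1) ^ ((L + 1) * 2 ^ b)"
    by (simp add: card_PiE)
  also have "\<dots> \<le> (2 ^ (L + 1)) ^ ((L + 1) * 2 ^ b)" using assms by (intro power_mono) auto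
  also have "\<dots> = 2 ^ ((L + 1) * 2 ^ b * (L + 1))" by (simp only: power_mult[symmetric] mult.commute)
  finally have "card (hash_seeds L (L + b)) * card (({..L} \<times> bucket_labels b) \<rightarrow>\<^sub>E {- int (n * M)..int (n * M)})
      \<le> 2 ^ ((L + 1) * (L + b)) * 2 ^ ((L + 1) * 2 ^ b * (L + 1))"
    unfolding card_hash_seeds by (rule mult_le_mono2)
  then show ?thesis by (simp only: card_cartesian_product power_add)
qed

lemma solves_sum_g_np_by_sketch:
  fixes e K eps bits :: real
  assumes "1 \<le> n" "1 \<le> M" and nM_less: "n * M < 2 ^ L"
    and e: "0 < e" "e \<le> 1/2" "e \<le> eps" and K: "1 \<le> K"
    and param: "real ((L + 1) ^ 2) * (2 / K + 8 / (e ^ 2 * K) + 8 * K / (e * 2 ^ b)) \<le> 1/3"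
    and bits: "real ((L + 1) * (L + b) + (L + 1) * 2 ^ b * (L + 1)) \<le> bits"
  shows "\<exists>A. solves_sum g_np eps n M A bits"
proof (rule solves_sum_by_sketch[where sk = "sketch n L b" and up = "sketch_update n L b"
      and est = "\<lambda>s. g_np_estimate L b K" and W = "(L + 1) * (L + b) + (L + 1) * 2 ^ b * (L + 1)"])
  show "finite (hash_seeds L (L + b))" "hash_seeds L (L + b) \<noteq> {}"
    by (simp_all add: hash_seeds_nonempty)
  show "finite (hash_seeds L (L + b) \<times> (({..L} \<times> bucket_labels b) \<rightarrow>\<^sub>E {- int (n * M)..int (n * M)}))"
    by (intro finite_cartesian_product finite_PiE) auto
  show "(s, sketch n L b s v) \<in> hash_seeds L (L + b) \<times> (({..L} \<times> bucket_labels b) \<rightarrow>\<^sub>E {- int (n * M)..int (n * M)})"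
    if "s \<in> hash_seeds L (L + b)" "\<forall>i. \<bar>v i\<bar> \<le> int M" for s v
    by (rule SigmaI[OF that(1) sketch_in_range[OF that(2)]])
  fix v :: "nat \<Rightarrow> int" assume v: "\<forall>i. \<bar>v i\<bar> \<le> int M"
  let ?S = "hash_seeds L (L + b)" and ?g = "gsum g_np n v"
  let ?good = "\<lambda>e. {s\<in>?S. \<bar>g_np_estimate L b K (sketch n L b s v) - ?g\<bar> \<le> e * ?g}"
  let ?bad = "{s\<in>?S. \<not> \<bar>g_np_estimate L b K (sketch n L b s v) - ?g\<bar> \<le> e * ?g}"
  have "card ?S = card (?good e) + card ?bad"
    by (subst card_Un_disjoint[symmetric]) (auto intro: arg_cong[where f = card])
  then have "2/3 * real (card ?S) \<le> real (card (?good e))"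
    using card_inaccurate_seeds[OF e(1,2) K assms(1,2) nM_less v param] by simp
  moreover have "e * ?g \<le> eps * ?g" using e(3) gsum_g_np_nonneg[of n v] by (rule mult_right_mono)
  then have "?good e \<subseteq> ?good eps" by auto
  then have "real (card (?good e)) \<le> real (card (?good eps))" by (intro of_nat_mono card_mono) simp_all
  ultimately show "2/3 * real (card ?S) \<le> real (card (?good eps))" by linarith
qed (use card_sketch_states[OF nM_less] bits sketch_snoc in simp_all)

lemma solves_sum_g_np_exactly:
  fixes eps bits :: real
  assumes "M < 2 ^ L" "0 \<le> eps" "real (n * (L + 1)) \<le> bits"
  shows "\<exists>A. solves_sum g_np eps n M A bits"
proof (rule solves_sum_by_sketch[where S = "{()}" and sk = "\<lambda>_ v. restrict v {1..n}"
      and up = "\<lambda>_ t u. restrict (\<lambda>j. t j + (if fst u = j then snd u else 0)) {1..n}"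
      and est = "\<lambda>_ t. gsum g_np n t" and Bd = "{()} \<times> ({1..n} \<rightarrow>\<^sub>E {- int M..int M})" and W = "n * (L + 1)"])
  have "card {- int M..int M} = 2 * M + 1" by (rule card_int_interval)
  then have "card ({()} \<times> ({1..n} \<rightarrow>\<^sub>E {- int M..int M})) = (2 * M + 1) ^ n"
    by (simp add: card_cartesian_product card_PiE)
  also have "\<dots> \<le> (2 ^ (L + 1)) ^ n" using assms(1) by (intro power_mono) auto
  also have "\<dots> = 2 ^ (n * (L + 1))" by (simp only: power_mult[symmetric] mult.commute)
  finally show "card ({()} \<times> ({1..n} \<rightarrow>\<^sub>E {- int M..int M})) \<le> 2 ^ (n * (L + 1))" .
  show "restrict (freq (D @ [x])) {1..n} = restrict (\<lambda>j. restrict (freq D) {1..n} j + (if fst x = j then snd x else 0)) {1..n}"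
    for D x by (rule restrict_ext) (simp add: freq_snoc)
  show "(s, restrict v {1..n}) \<in> {()} \<times> ({1..n} \<rightarrow>\<^sub>E {- int M..int M})" if "\<forall>i. \<bar>v i\<bar> \<le> int M" for s v
    using that by (auto simp: PiE_iff abs_le_iff) (metis minus_le_iff)
  have "gsum g_np n (restrict v {1..n}) = gsum g_np n v" for v unfolding gsum_def by simp
  then show "2/3 * real (card {()}) \<le> real (card {s\<in>{()}. \<bar>gsum g_np n (restrict v {1..n}) - gsum g_np n v\<bar>
               \<le> eps * gsum g_np n v})" for v
    using assms(2) gsum_g_np_nonneg[of n v] by simp
qed (use assms(3) in \<open>simp_all add: finite_PiE\<close>)

section \<open>Choice of the parameters\<close>

lemma less_power_floorlog: "1 \<le> N \<Longrightarrow> N < 2 ^ floorlog 2 N"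
  using floorlog_bounds[of N 2] by simp

lemma floorlog_le_self: "floorlog 2 N \<le> N"
  by (intro floorlog_leI) (simp_all add: less_exp)

lemma power_floorlog_le: "1 \<le> N \<Longrightarrow> 2 ^ floorlog 2 N \<le> 2 * N"
proof -
  assume "1 \<le> N"
  then have "floorlog 2 N \<noteq> 0" and "2 ^ (floorlog 2 N - 1) \<le> N"
    using floorlog_bounds[of N 2] by (simp_all add: floorlog_eq_zero_iff)
  then show ?thesis by (metis Suc_diff_1 mult_le_mono2 not_gr0 power_Suc)
qed

lemma floorlog_le_log: "1 \<le> N \<Longrightarrow> real (floorlog 2 N) \<le> log 2 (real N) + 1"
  unfolding floorlog_def by simp

lemma error_terms_le:
  fixes H P e K B :: real
  assumes H: "2 \<le> H" and P: "1 \<le> P" and e: "0 < e" and eH: "1 \<le> e * H"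
    and K: "K = 60 * H ^ 2 * P" and B: "48 * K * H * P \<le> B"
  shows "P * (2 / K + 8 / (e ^ 2 * K) + 8 * K / (e * B)) \<le> 1/3"
proof -
  have K_pos: "K > 0" using K H P by simp
  have B_pos: "B > 0" using B K_pos H P by (smt (verit) mult_pos_pos)
  have inv_e: "1 / e \<le> H" using eH e by (simp add: field_simps)
  then have "1 / e ^ 2 \<le> H ^ 2" using e by (metis power_mono power_one_over less_eq_real_def zero_less_divide_1_iff)
  then have "8 / (e ^ 2 * K) \<le> 8 * H ^ 2 / K"
    using K_pos by (metis divide_right_mono less_eq_real_def mult_left_mono times_divide_eq_right
        zero_le_numeral divide_divide_eq_left mult_1_right)
  moreover have "2 / K \<le> 2 * H ^ 2 / K"
    using power_mono[of 1 H 2] H K_pos by (intro divide_right_mono) auto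
  ultimately have "2 / K + 8 / (e ^ 2 * K) \<le> 10 * H ^ 2 / K" by (simp add: add_divide_distrib[symmetric])
  also have "10 * H ^ 2 / K = 1 / (6 * P)" using K H P by (simp add: field_simps)
  finally have "2 / K + 8 / (e ^ 2 * K) \<le> 1 / (6 * P)" .
  moreover have "8 * K / (e * B) \<le> 1 / (6 * P)"
  proof -
    have "8 * K / (e * B) = 8 * K * (1 / e) / B" by simp
    also have "\<dots> \<le> 8 * K * H / B" using inv_e K_pos B_pos by (intro divide_right_mono mult_left_mono) auto
    also have "\<dots> \<le> 8 * K * H / (48 * K * H * P)"
      using B K_pos B_pos H P by (intro divide_left_mono) (auto intro!: mult_pos_pos)
    also have "\<dots> = 1 / (6 * P)" using K_pos H P by (simp add: field_simps)
    finally show ?thesis .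
  qed
  ultimately have "P * (2 / K + 8 / (e ^ 2 * K) + 8 * K / (e * B)) \<le> P * (1 / (6 * P) + 1 / (6 * P))"
    using P by (intro mult_left_mono) auto
  also have "\<dots> = 1/3" using P by (simp add: field_simps)
  finally show ?thesis .
qed

lemma sketch_size_le:
  fixes L b t :: nat
  assumes "2 ^ b \<le> 2 * t"
  shows "(L + 1) * (L + b) + (L + 1) * 2 ^ b * (L + 1) \<le> 6 * (L + 1) ^ 2 * t"
proof -
  have "b \<le> 2 ^ b" using less_exp[of b] by simp
  have "(L + 1) * (L + b) = (L + 1) * L + (L + 1) * b" by (simp add: algebra_simps)
  also have "(L + 1) * L \<le> (L + 1) * (L + 1) * 2 ^ b"
    using mult_le_mono[of "(L + 1) * L" "(L + 1) * (L + 1)" 1 "2 ^ b"] by simp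
  also have "(L + 1) * b \<le> (L + 1) * (L + 1) * 2 ^ b"
    using mult_le_mono[of "L + 1" "(L + 1) * (L + 1)" b "2 ^ b"] \<open>b \<le> 2 ^ b\<close> by simp
  finally have "(L + 1) * (L + b) + (L + 1) * 2 ^ b * (L + 1) \<le> 3 * ((L + 1) ^ 2 * 2 ^ b)"
    by (simp add: power2_eq_square algebra_simps)
  also have "\<dots> \<le> 3 * ((L + 1) ^ 2 * (2 * t))" using assms by simp
  finally show ?thesis by simp
qed

text \<open>The sketch takes at most \<open>6 \<cdot> 2880 H^3 (L + 1)^6\<close> bits for \<open>H \<approx> h(n M)\<close> and \<open>L \<approx> log(n M)\<close>;
  below \<open>X0\<close>, where \<open>h\<close> may vanish, the frequency vector is stored instead.\<close>
definition space_bound :: "(real \<Rightarrow> real) \<Rightarrow> nat \<Rightarrow> real \<Rightarrow> real" where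
  "space_bound h X0 x = 17280 * (h x + 3) ^ 3 * (log 2 (max x 1) + 2) ^ 6
                          + (if x < real X0 then real (X0 * (X0 + 1)) else 0)"

lemma space_bound_ge_1:
  assumes "\<And>x. x \<ge> 0 \<Longrightarrow> h x \<ge> 0" "x \<ge> 0"
  shows "1 \<le> space_bound h X0 x"
proof -
  have "(3::real) ^ 3 \<le> (h x + 3) ^ 3" using assms by (intro power_mono) auto
  moreover have "(2::real) ^ 6 \<le> (log 2 (max x 1) + 2) ^ 6" by (intro power_mono) auto
  ultimately have "17280 * 3 ^ 3 * 2 ^ 6 \<le> 17280 * (h x + 3) ^ 3 * (log 2 (max x 1) + 2) ^ 6"
    using assms by (intro mult_mono mult_left_mono) auto
  moreover have "0 \<le> (if x < real X0 then real (X0 * (X0 + 1)) else 0)" "(1::real) \<le> 17280 * 3 ^ 3 * 2 ^ 6"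
    by simp_all
  ultimately show ?thesis unfolding space_bound_def by linarith
qed

lemma space_bound_decay:
  assumes "sub_polynomial h" "a > 0"
  shows "((\<lambda>x. x powr (- a) * space_bound h X0 x) \<longlongrightarrow> 0) at_top"
proof -
  define f1 where "f1 = (\<lambda>x::real. x powr (- (a / 6)) * h x + 3 * x powr (- (a / 6)))"
  define f2 where "f2 = (\<lambda>x::real. x powr (- (a / 12)) * (log 2 x + 2))"
  have "((\<lambda>x. x powr (- (a / 6)) * h x) \<longlongrightarrow> 0) at_top"
    using assms unfolding sub_polynomial_def by simp
  moreover have "((\<lambda>x::real. 3 * x powr (- (a / 6))) \<longlongrightarrow> 0) at_top" using assms(2) by real_asymp
  ultimately have "(f1 \<longlongrightarrow> 0) at_top" unfolding f1_def using tendsto_add by fastforce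
  moreover have "(f2 \<longlongrightarrow> 0) at_top" unfolding f2_def using assms(2) by real_asymp
  ultimately have "((\<lambda>x. 17280 * f1 x ^ 3 * f2 x ^ 6) \<longlongrightarrow> 17280 * 0 ^ 3 * 0 ^ 6) at_top"
    by (intro tendsto_mult tendsto_power tendsto_const)
  moreover have "\<forall>\<^sub>F x in at_top. 17280 * f1 x ^ 3 * f2 x ^ 6 = x powr (- a) * space_bound h X0 x"
    using eventually_ge_at_top[of "max (real X0) 1"]
  proof (rule eventually_mono)
    fix x :: real assume x: "x \<ge> max (real X0) 1"
    then have x_pos: "x > 0" by simp
    have "f1 x = x powr (- (a / 6)) * (h x + 3)" unfolding f1_def by (simp add: algebra_simps)
    then have "f1 x ^ 3 = x powr (- (a / 2)) * (h x + 3) ^ 3"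
      using x_pos by (simp add: power_mult_distrib powr_power)
    moreover have "f2 x ^ 6 = x powr (- (a / 2)) * (log 2 x + 2) ^ 6"
      unfolding f2_def using x_pos by (simp add: power_mult_distrib powr_power)
    moreover have "x powr (- (a / 2)) * x powr (- (a / 2)) = x powr (- a)"
      by (simp add: powr_add[symmetric])
    moreover have "space_bound h X0 x = 17280 * (h x + 3) ^ 3 * (log 2 x + 2) ^ 6"
      unfolding space_bound_def using x by simp
    ultimately show "17280 * f1 x ^ 3 * f2 x ^ 6 = x powr (- a) * space_bound h X0 x"
      by (simp add: algebra_simps)
  qed
  ultimately show ?thesis by (simp add: tendsto_cong)
qed

lemma sub_polynomial_space_bound:
  assumes "sub_polynomial h"
  shows "sub_polynomial (space_bound h X0)"
  unfolding sub_polynomial_def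
proof (intro conjI allI impI)
  have h_nonneg: "\<And>x. x \<ge> 0 \<Longrightarrow> h x \<ge> 0" using assms unfolding sub_polynomial_def by blast
  then show "x \<ge> 0 \<Longrightarrow> space_bound h X0 x \<ge> 0" for x by (smt (verit) space_bound_ge_1)
  fix a :: real assume "a > 0"
  then have "filterlim (\<lambda>x::real. x powr a) at_top at_top" by real_asymp
  moreover have "\<forall>\<^sub>F x in at_top. x powr a \<le> x powr a * space_bound h X0 x"
    using eventually_ge_at_top[of 0]
  proof (rule eventually_mono)
    fix x :: real assume "x \<ge> 0"
    then have "x powr a * 1 \<le> x powr a * space_bound h X0 x"
      using space_bound_ge_1[OF h_nonneg] by (intro mult_left_mono) auto
    then show "x powr a \<le> x powr a * space_bound h X0 x" by simp
  qed
  ultimately show "filterlim (\<lambda>x. x powr a * space_bound h X0 x) at_top at_top"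
    by (rule filterlim_at_top_mono)
  show "((\<lambda>x. x powr (- a) * space_bound h X0 x) \<longlongrightarrow> 0) at_top"
    by (rule space_bound_decay[OF assms \<open>a > 0\<close>])
qed

lemma exists_sketch_parameters:
  fixes Hn L :: nat and e :: real
  assumes Hn: "2 \<le> Hn" and e: "0 < e" "1 \<le> e * real Hn"
  shows "\<exists>K b. 1 \<le> K \<and> real ((L + 1) ^ 2) * (2 / K + 8 / (e ^ 2 * K) + 8 * K / (e * 2 ^ b)) \<le> 1/3
               \<and> (L + 1) * (L + b) + (L + 1) * 2 ^ b * (L + 1) \<le> 17280 * Hn ^ 3 * (L + 1) ^ 6"
proof -
  define H where "H = real Hn"
  define P where "P = real ((L + 1) ^ 2)"
  define K where "K = 60 * H ^ 2 * P"
  define t where "t = 2880 * Hn ^ 3 * (L + 1) ^ 4"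
  define b where "b = floorlog 2 t"
  have H2: "2 \<le> H" and P1: "1 \<le> P" using Hn unfolding H_def P_def by simp_all
  have "1 \<le> t" unfolding t_def using Hn by simp
  then have t_less: "t < 2 ^ b" and t_ge: "2 ^ b \<le> 2 * t"
    unfolding b_def by (simp_all add: less_power_floorlog power_floorlog_le)
  have "48 * K * H * P = real t"
    unfolding K_def t_def H_def P_def by (simp add: algebra_simps power2_eq_square power3_eq_cube power4_eq_xxxx)
  also have "\<dots> \<le> 2 ^ b" using t_less by (metis less_imp_le of_nat_le_iff of_nat_numeral of_nat_power)
  finally have "P * (2 / K + 8 / (e ^ 2 * K) + 8 * K / (e * 2 ^ b)) \<le> 1/3"
    using error_terms_le[OF H2 P1 e(1)] e(2) unfolding H_def K_def by simp
  moreover have "1 \<le> K"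
  proof -
    have "1 * 1 \<le> H ^ 2 * P" using H2 P1 power_mono[of 1 H 2] by (intro mult_mono) auto
    then show ?thesis unfolding K_def by simp
  qed
  moreover have "(L + 1) * (L + b) + (L + 1) * 2 ^ b * (L + 1) \<le> 17280 * Hn ^ 3 * (L + 1) ^ 6"
    using sketch_size_le[OF t_ge, of L] unfolding t_def by (simp add: power_add[symmetric] algebra_simps)
  ultimately show ?thesis unfolding P_def by blast
qed

lemma solves_sum_g_np_sketching:
  fixes h :: "real \<Rightarrow> real" and eps :: real and n M :: nat
  defines "N \<equiv> n * M"
  assumes h: "sub_polynomial h" and eps: "1 / h (real N) \<le> eps" and h_pos: "h (real N) > 0"
    and "1 \<le> n" "1 \<le> M"
  shows "\<exists>A. solves_sum g_np eps n M A (space_bound h X0 (real N))"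
proof -
  have N1: "1 \<le> N" unfolding N_def using assms(5,6) by simp
  define L where "L = floorlog 2 N"
  define Hn where "Hn = nat \<lceil>max (h (real N)) 2\<rceil>"
  define e where "e = min eps (1/2)"
  have "h (real N) \<ge> 0" using h unfolding sub_polynomial_def by simp
  moreover have "real Hn = of_int \<lceil>max (h (real N)) 2\<rceil>" unfolding Hn_def by simp
  ultimately have H2: "2 \<le> Hn" and h_le: "h (real N) \<le> real Hn" and H3: "real Hn \<le> h (real N) + 3"
    by linarith+
  have "0 < eps" using eps h_pos by (smt (verit) divide_pos_pos)
  then have e: "0 < e" "e \<le> 1/2" "e \<le> eps" unfolding e_def by simp_all
  have "1 \<le> e * real Hn"
  proof (cases "eps \<le> 1/2")
    case True
    have "1 \<le> 1 / h (real N) * real Hn" using h_le h_pos by (simp add: field_simps)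
    also have "\<dots> \<le> e * real Hn" using True eps unfolding e_def by (intro mult_right_mono) auto
    finally show ?thesis .
  next
    case False
    then show ?thesis using H2 unfolding e_def by simp
  qed
  then obtain K b where K: "1 \<le> K"
    and param: "real ((L + 1) ^ 2) * (2 / K + 8 / (e ^ 2 * K) + 8 * K / (e * 2 ^ b)) \<le> 1/3"
    and size: "(L + 1) * (L + b) + (L + 1) * 2 ^ b * (L + 1) \<le> 17280 * Hn ^ 3 * (L + 1) ^ 6"
    using exists_sketch_parameters[OF H2 e(1)] by blast
  have "real ((L + 1) * (L + b) + (L + 1) * 2 ^ b * (L + 1)) \<le> real (17280 * Hn ^ 3 * (L + 1) ^ 6)"
    using size by (simp only: of_nat_le_iff)
  also have "\<dots> = 17280 * real Hn ^ 3 * (real L + 1) ^ 6" by (simp add: add.commute)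
  also have "\<dots> \<le> 17280 * (h (real N) + 3) ^ 3 * (log 2 (real N) + 2) ^ 6"
    using H2 H3 floorlog_le_log[OF N1] unfolding L_def
    by (intro mult_mono mult_left_mono power_mono) auto
  also have "\<dots> \<le> space_bound h X0 (real N)" unfolding space_bound_def using N1 by simp
  finally have bits: "real ((L + 1) * (L + b) + (L + 1) * 2 ^ b * (L + 1)) \<le> space_bound h X0 (real N)" .
  have "n * M < 2 ^ L" using less_power_floorlog[OF N1] unfolding L_def N_def .
  from solves_sum_g_np_by_sketch[OF assms(5,6) this e K param bits] show ?thesis .
qed

lemma solves_sum_g_np_small:
  fixes h :: "real \<Rightarrow> real" and eps :: real and n M :: nat
  defines "N \<equiv> n * M"
  assumes h: "sub_polynomial h" and eps: "1 / h (real N) \<le> eps" and "N < X0"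
    and "1 \<le> n" "1 \<le> M"
  shows "\<exists>A. solves_sum g_np eps n M A (space_bound h X0 (real N))"
proof -
  have N1: "1 \<le> N" unfolding N_def using assms(5,6) by simp
  have h_nonneg: "h (real N) \<ge> 0" using h unfolding sub_polynomial_def by simp
  have "M \<le> N" "n \<le> N" unfolding N_def using assms(5,6) by simp_all
  then have "M < 2 ^ floorlog 2 N" using less_power_floorlog[OF N1] by linarith
  moreover have "0 \<le> eps" using eps h_nonneg by (smt (verit) divide_nonneg_nonneg)
  moreover have "real (n * (floorlog 2 N + 1)) \<le> space_bound h X0 (real N)"
  proof -
    have "n * (floorlog 2 N + 1) \<le> X0 * (X0 + 1)"
      using \<open>n \<le> N\<close> \<open>N < X0\<close> floorlog_le_self[of N] by (intro mult_le_mono) auto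
    then have "real (n * (floorlog 2 N + 1)) \<le> real (X0 * (X0 + 1))" by (simp only: of_nat_le_iff)
    moreover have nonneg: "0 \<le> 17280 * (h (real N) + 3) ^ 3 * (log 2 (max (real N) 1) + 2) ^ 6"
      using h_nonneg by simp
    moreover have "real N < real X0" using \<open>N < X0\<close> by simp
    ultimately show ?thesis
      unfolding space_bound_def using nonneg by (simp only: if_True)
  qed
  ultimately show ?thesis by (rule solves_sum_g_np_exactly)
qed

lemma sub_polynomial_eventually_pos:
  assumes "sub_polynomial h"
  obtains X0 :: nat where "\<And>x. real X0 \<le> x \<Longrightarrow> h x > 0"
proof -
  have "filterlim (\<lambda>x. x powr 1 * h x) at_top at_top"
    using assms unfolding sub_polynomial_def by (meson zero_less_one)
  then have "\<forall>\<^sub>F x in at_top. 1 \<le> x powr 1 * h x \<and> 1 \<le> x"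
    by (auto simp: filterlim_at_top intro: eventually_conj eventually_ge_at_top)
  then have "\<forall>\<^sub>F x in at_top. h x > 0"
  proof (rule eventually_mono)
    fix x :: real assume x: "1 \<le> x powr 1 * h x \<and> 1 \<le> x"
    show "h x > 0"
    proof (rule ccontr)
      assume "\<not> h x > 0"
      then have "x powr 1 * h x \<le> 0" by (intro mult_nonneg_nonpos) auto
      with x show False by linarith
    qed
  qed
  then obtain X where X: "\<And>x. x \<ge> X \<Longrightarrow> h x > 0" by (auto simp: eventually_at_top_linorder)
  show ?thesis
  proof (rule that)
    fix x assume "real (nat \<lceil>X\<rceil>) \<le> x"
    then have "X \<le> x" by linarith
    then show "h x > 0" by (rule X)
  qed
qed

theorem proposition54:
  shows "one_pass_tractable g_np"
  unfolding one_pass_tractable_def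
proof (intro allI impI)
  fix h :: "real \<Rightarrow> real" and eps :: "nat \<Rightarrow> nat \<Rightarrow> real"
  assume "sub_polynomial h \<and> (\<forall>n M. 1 / h (real (n * M)) \<le> eps n M)"
  then have h: "sub_polynomial h" and eps: "\<And>n M. 1 / h (real (n * M)) \<le> eps n M" by auto
  obtain X0 where X0: "\<And>x. real X0 \<le> x \<Longrightarrow> h x > 0" using sub_polynomial_eventually_pos[OF h] by blast
  have "\<exists>A. solves_sum g_np (eps n M) n M A (space_bound h X0 (real (n * M)))" if "1 \<le> n" "1 \<le> M" for n M
  proof (cases "n * M < X0")
    case True
    then show ?thesis using solves_sum_g_np_small[OF h eps True that] by simp
  next
    case False
    then have "real X0 \<le> real (n * M)" by (simp only: not_less of_nat_le_iff)
    then have h_pos: "h (real (n * M)) > 0" by (rule X0)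
    show ?thesis using solves_sum_g_np_sketching[OF h eps h_pos that] by blast
  qed
  then obtain A where "\<And>n M. 1 \<le> n \<and> 1 \<le> M \<Longrightarrow> solves_sum g_np (eps n M) n M (A n M) (space_bound h X0 (real (n * M)))"
    by metis
  then show "\<exists>hs A. sub_polynomial hs \<and>
      (\<forall>n M. 1 \<le> n \<and> 1 \<le> M \<longrightarrow> solves_sum g_np (eps n M) n M (A n M) (hs (real (n * M))))"
    using sub_polynomial_space_bound[OF h] by blast
qed

end
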